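(* Let $V\in\mathbb{C}^{N\times N}$ be unitary, $c_1,c_2\in\mathbb{R}$, $D=c_1I+c_2V$, and $b\neq0$. Let $q_j$, $l_{jj}$, $l_{j+1,j}$, $u_{j-1,j}$ ($j=1,\dots,k$) be produced by the unitary Arnoldi process (described in the context) without breakdown, with $Q_k,L_k,U_k$ as there. Let $T_k=c_1U_k+c_2L_k$ (a tridiagonal matrix) and set $\beta_j=-c_2l_{j+1,j}$, $\gamma_j=-c_1u_{j,j+1}$. Assume $T_k$ has an LU factorization $T_k=\tilde L_k\tilde U_k$ with $\tilde L_k$ lower triangular with diagonal entries $\tilde l_{jj}\neq0$ and $\tilde U_k$ unit upper triangular. Then $$\tilde l_{11}=c_1+c_2l_{11},\qquad \tilde l_{jj}=c_1+c_2l_{jj}-\frac{\beta_{j-1}\gamma_{j-1}}{\tilde l_{j-1,j-1}}\quad(2\le j\le k).$$ Define $\alpha_1=\|b\|_2/\tilde l_{11}$, $\alpha_j=\beta_{j-1}\alpha_{j-1}/\tilde l_{jj}$, $w_1=q_1$, $w_j=q_j+u_{j-1,j}q_{j-1}+\frac{\gamma_{j-1}}{\tilde l_{j-1,j-1}}w_{j-1}$, $x_0=0$ and $x_j=x_{j-1}+\alpha_jw_j$. Then $w_j=Q_jU_j\tilde U_j^{-1}e_j$, $\alpha_j=\|b\|_2\,e_j^TT_j^{-1}e_1$, and $x_k$ is the unique vector in $\mathrm{span}\{b,Db,\dots,D^{k-1}b\}$ whose residual $r_k=b-Dx_k$ is orthogonal to this Krylov subspace; namely $x_k=Q_kU_kz_k$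 with $T_kz_k=\|b\|_2e_1$. Moreover $r_k=r_{k-1}-\alpha_kDw_k$.
   Context: Unitary Arnoldi process: $q_1=b/\|b\|_2$, $q_0=0$, $v_0=0$, $u_{01}=0$; for $j=1,2,\dots$: $v_j=Vq_j$, $u_{j-1,j}=-(q_{j-1}^*v_j)/(q_{j-1}^*v_{j-1})$ for $j>1$, $l_{jj}=q_j^*v_j+u_{j-1,j}q_j^*v_{j-1}$, $\tilde q_{j+1}=v_j-l_{jj}q_j+u_{j-1,j}v_{j-1}$, $l_{j+1,j}=\|\tilde q_{j+1}\|_2$, $q_{j+1}=\tilde q_{j+1}/l_{j+1,j}$; no breakdown means all $l_{j+1,j}\neq0$ and denominators nonzero. $Q_k=[q_1,\dots,q_k]$; $L_k$ is $k\times k$ lower bidiagonal with diagonal $l_{jj}$ and subdiagonal $l_{j+1,j}$; $U_k$ is $k\times k$ upper bidiagonal with unit diagonal and superdiagonal $u_{j-1,j}$. These satisfy $VQ_kU_k=Q_kL_k+l_{k+1,k}q_{k+1}e_k^T$ with $Q_{k+1}$ orthonormal. $e_j$ is the $j$-th standard unit vector. *)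

theory Defs
  imports Complex_Main "Jordan_Normal_Form.Schur_Decomposition"
    "Jordan_Normal_Form.Gauss_Jordan_Elimination"
begin

definition vnorm :: "complex vec \<Rightarrow> real" where
  "vnorm x = sqrt (\<Sum>i<dim_vec x. (cmod (x $ i))\<^sup>2)"

text \<open>Indices of q, v, u, l are 1-based as in the paper.
  Note u \<bullet>c w = sum of u_i * conj(w_i), so q^* v is written v \<bullet>c q.\<close>
definition unitary_arnoldi ::
  "complex mat \<Rightarrow> complex vec \<Rightarrow> nat \<Rightarrow> (nat \<Rightarrow> complex vec) \<Rightarrow> (nat \<Rightarrow> complex vec)
    \<Rightarrow> (nat \<Rightarrow> nat \<Rightarrow> complex) \<Rightarrow> (nat \<Rightarrow> nat \<Rightarrow> complex) \<Rightarrow> bool" where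
  "unitary_arnoldi V b k q v u l \<longleftrightarrow>
     q 0 = 0\<^sub>v (dim_row V) \<and> v 0 = 0\<^sub>v (dim_row V) \<and> u 0 1 = 0 \<and>
     q 1 = (1 / complex_of_real (vnorm b)) \<cdot>\<^sub>v b \<and>
     (\<forall>j\<in>{1..k}.
        v j = V *\<^sub>v q j \<and>
        (1 < j \<longrightarrow> v (j-1) \<bullet>c q (j-1) \<noteq> 0 \<and>
                   u (j-1) j = - (v j \<bullet>c q (j-1)) / (v (j-1) \<bullet>c q (j-1))) \<and>
        l j j = (v j \<bullet>c q j) + u (j-1) j * (v (j-1) \<bullet>c q j) \<and>
        (let qt = v j - l j j \<cdot>\<^sub>v q j + u (j-1) j \<cdot>\<^sub>v v (j-1) in
           vnorm qt \<noteq> 0 \<and> l (j+1) j = complex_of_real (vnorm qt) \<and>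
           q (j+1) = (1 / l (j+1) j) \<cdot>\<^sub>v qt))"

definition Qmat :: "(nat \<Rightarrow> complex vec) \<Rightarrow> nat \<Rightarrow> nat \<Rightarrow> complex mat" where
  "Qmat q N j = mat N j (\<lambda>(r,c). q (c+1) $ r)"

definition Lmat :: "(nat \<Rightarrow> nat \<Rightarrow> complex) \<Rightarrow> nat \<Rightarrow> complex mat" where
  "Lmat l j = mat j j (\<lambda>(r,c). if r = c then l (r+1) (r+1)
                               else if r = c + 1 then l (r+1) (c+1) else 0)"

definition Umat :: "(nat \<Rightarrow> nat \<Rightarrow> complex) \<Rightarrow> nat \<Rightarrow> complex mat" where
  "Umat u j = mat j j (\<lambda>(r,c). if r = c then 1
                               else if c = r + 1 then u (r+1) (c+1) else 0)"

definition Tmat :: "real \<Rightarrow> real \<Rightarrow> (nat \<Rightarrow> nat \<Rightarrow> complex) \<Rightarrow> (nat \<Rightarrow> nat \<Rightarrow> complex)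
    \<Rightarrow> nat \<Rightarrow> complex mat" where
  "Tmat c1 c2 u l j = complex_of_real c1 \<cdot>\<^sub>m Umat u j + complex_of_real c2 \<cdot>\<^sub>m Lmat l j"

definition lead_sub :: "complex mat \<Rightarrow> nat \<Rightarrow> complex mat" where
  "lead_sub A j = mat j j (\<lambda>(r,c). A $$ (r,c))"

definition minv :: "complex mat \<Rightarrow> complex mat" where
  "minv A = the (mat_inverse A)"

text \<open>Krylov subspace span{b, Db, ..., D^(k-1) b}: all linear combinations,
  i.e. the range of the Krylov matrix [b, Db, ..., D^(k-1) b].\<close>
definition krylov :: "complex mat \<Rightarrow> complex vec \<Rightarrow> nat \<Rightarrow> complex vec set" where
  "krylov D b k = {mat (dim_vec b) k (\<lambda>(r,c). ((D ^\<^sub>m c) *\<^sub>v b) $ r) *\<^sub>v a | a. a \<in> carrier_vec k}"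

end

(*
  The Arnoldi vectors q_1, ..., q_(k+1) are orthonormal: q_i = c q_1 + V s with s in
  span {q_1, ..., q_(i-1)}, and since V is an isometry the choice of u_(j-1,j) that makes
  V (q_j + u_(j-1,j) q_(j-1)) orthogonal to q_(j-1) makes it orthogonal to all earlier q_i.
  The recurrence then reads V Q_k U_k = Q_k L_k + l_(k+1,k) q_(k+1) e_k^T, whence
  Q_k^* D Q_k U_k = c1 U_k + c2 L_k = T_k. The Krylov space lies in span Q_k (with equality
  if c2 is nonzero, while D = c1 I if c2 = 0), so for x = Q_k U_k z the Galerkin condition
  is T_k z = |b| e_1, which has a unique solution because T_k = Lt Ut is invertible.
  Finally, the recurrences for w_j and alpha_j say that W_k Ut = Q_k U_k for W_k = [w_1 .. w_k]
  and Lt a = |b| e_1 for a = (alpha_1 .. alpha_k), so x_k = W_k a = Q_k U_k (Ut^-1 a) with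
  T_k (Ut^-1 a) = Lt a = |b| e_1.
*)

theory Submission
  imports Defs
begin

lemma mult_mat_vec_zero: "A \<in> carrier_mat n m \<Longrightarrow> A *\<^sub>v 0\<^sub>v m = 0\<^sub>v n"
  by (auto intro!: eq_vecI)

lemma diff_eq_0_vec_iff:
  fixes x y :: "'a :: ab_group_add vec"
  assumes "x \<in> carrier_vec n" "y \<in> carrier_vec n"
  shows "x - y = 0\<^sub>v n \<longleftrightarrow> x = y"
proof
  assume "x - y = 0\<^sub>v n"
  have "x $ i = y $ i" if "i < n" for i
    using arg_cong[OF \<open>x - y = 0\<^sub>v n\<close>, of "\<lambda>w. w $ i"] carrier_vecD[OF assms(2)] that by simp
  then show "x = y"
    using assms by (auto intro: eq_vecI)
qed (use assms in simp)

lemma minv_inverse: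
  fixes A :: "complex mat"
  assumes A: "A \<in> carrier_mat n n" and det: "det A \<noteq> 0"
  shows minv_carrier: "minv A \<in> carrier_mat n n"
    and mult_minv: "A * minv A = 1\<^sub>m n"
    and minv_mult: "minv A * A = 1\<^sub>m n"
proof -
  have "A \<in> Units (ring_mat TYPE(complex) n ())"
    by (rule det_non_zero_imp_unit[OF A det])
  then obtain B where B: "mat_inverse A = Some B"
    using mat_inverse(1)[OF A, where b = "()"] by (cases "mat_inverse A") auto
  then show "minv A \<in> carrier_mat n n" "A * minv A = 1\<^sub>m n" "minv A * A = 1\<^sub>m n"
    using mat_inverse(2)[OF A B] unfolding minv_def by auto
qed

lemma minv_mult_vec_eq:
  fixes A :: "complex mat"
  assumes A: "A \<in> carrier_mat n n" "det A \<noteq> 0" and x: "x \<in> carrier_vec n" and "A *\<^sub>v x = y"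
  shows "minv A *\<^sub>v y = x"
proof -
  have "minv A *\<^sub>v y = (minv A * A) *\<^sub>v x"
    using assoc_mult_mat_vec[OF minv_carrier[OF A] A(1) x] assms(4) by simp
  then show ?thesis
    using minv_mult[OF A] x by simp
qed

lemma smult_mat_mult_vec:
  fixes A :: "'a :: comm_ring_1 mat"
  assumes "A \<in> carrier_mat n m" "x \<in> carrier_vec m"
  shows "(c \<cdot>\<^sub>m A) *\<^sub>v x = c \<cdot>\<^sub>v (A *\<^sub>v x)"
  using assms by (auto simp: scalar_prod_def sum_distrib_left mult.assoc intro!: eq_vecI)

lemma pow_mat_Suc_left:
  fixes A :: "'a :: semiring_1 mat"
  assumes A: "A \<in> carrier_mat n n"
  shows "A ^\<^sub>m Suc c = A * A ^\<^sub>m c"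
proof (induction c)
  case (Suc c)
  have "A ^\<^sub>m Suc (Suc c) = (A * A ^\<^sub>m c) * A"
    using Suc by simp
  also have "\<dots> = A * (A ^\<^sub>m c * A)"
    using A by (simp add: assoc_mult_mat[of _ n n _ n _ n])
  finally show ?case
    by simp
qed (use A in simp)

lemma lead_sub_carrier [simp]: "lead_sub A j \<in> carrier_mat j j"
  and lead_sub_dim [simp]: "dim_row (lead_sub A j) = j" "dim_col (lead_sub A j) = j"
  by (simp_all add: lead_sub_def)

lemma lead_sub_index [simp]: "r < j \<Longrightarrow> c < j \<Longrightarrow> lead_sub A j $$ (r, c) = A $$ (r, c)"
  by (simp add: lead_sub_def)

lemma mat_mult_smult_unit_vec_0_index:
  fixes M :: "'a :: field mat"
  assumes "M \<in> carrier_mat n n" "i < n"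
  shows "(M *\<^sub>v (c \<cdot>\<^sub>v unit_vec n 0)) $ i = c * M $$ (i, 0)"
  using assms by (simp add: mult_mat_vec[OF assms(1) unit_vec_carrier])

lemma cscalar_prod_add_left:
  fixes x y z :: "complex vec"
  assumes "x \<in> carrier_vec n" "y \<in> carrier_vec n" "z \<in> carrier_vec n"
  shows "(x + y) \<bullet>c z = x \<bullet>c z + y \<bullet>c z"
  using assms by (simp add: add_scalar_prod_distrib[of _ n])

lemma cscalar_prod_diff_left:
  fixes x y z :: "complex vec"
  assumes "x \<in> carrier_vec n" "y \<in> carrier_vec n" "z \<in> carrier_vec n"
  shows "(x - y) \<bullet>c z = x \<bullet>c z - y \<bullet>c z"
  using assms by (simp add: minus_scalar_prod_distrib[of _ n])

lemma cscalar_prod_add_right: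
  fixes x y z :: "complex vec"
  assumes "x \<in> carrier_vec n" "y \<in> carrier_vec n" "z \<in> carrier_vec n"
  shows "z \<bullet>c (x + y) = z \<bullet>c x + z \<bullet>c y"
  using assms by (simp add: conjugate_add_vec[of _ n] scalar_prod_add_distrib[of _ n])

lemma cscalar_prod_smult_left:
  fixes x z :: "complex vec"
  assumes "x \<in> carrier_vec n" "z \<in> carrier_vec n"
  shows "(c \<cdot>\<^sub>v x) \<bullet>c z = c * (x \<bullet>c z)"
  using assms by simp

lemma cscalar_prod_smult_right:
  fixes x z :: "complex vec"
  assumes "x \<in> carrier_vec n" "z \<in> carrier_vec n"
  shows "x \<bullet>c (c \<cdot>\<^sub>v z) = cnj c * (x \<bullet>c z)"
  using assms by (simp add: conjugate_smult_vec)

lemma cscalar_prod_swap: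
  fixes x z :: "complex vec"
  assumes "x \<in> carrier_vec n" "z \<in> carrier_vec n"
  shows "x \<bullet>c z = cnj (z \<bullet>c x)"
  using assms conjugate_conjugate_sprod[of x n z] conjugate_vec_sprod_comm[of z n x] by simp

lemma cscalar_prod_self:
  fixes x :: "complex vec"
  assumes "x \<in> carrier_vec n"
  shows "x \<bullet>c x = complex_of_real (vnorm x ^ 2)"
proof -
  have "x \<bullet>c x = (\<Sum>i<n. x $ i * cnj (x $ i))"
    using assms by (simp add: scalar_prod_def lessThan_atLeast0)
  also have "\<dots> = complex_of_real (\<Sum>i<n. (cmod (x $ i))\<^sup>2)"
    by (simp only: of_real_sum complex_norm_square)
  finally show ?thesis
    using assms by (simp add: vnorm_def sum_nonneg)
qed

lemma vnorm_pos:
  fixes x :: "complex vec"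
  assumes "x \<in> carrier_vec n" "x \<noteq> 0\<^sub>v n"
  shows "vnorm x > 0"
proof -
  have "vnorm x \<noteq> 0"
    using assms cscalar_prod_self[OF assms(1)] conjugate_square_eq_0_vec[OF assms(1)] by auto
  moreover have "vnorm x \<ge> 0"
    unfolding vnorm_def by (simp add: sum_nonneg)
  ultimately show ?thesis by simp
qed

lemma cscalar_prod_normalized:
  fixes x :: "complex vec"
  assumes "x \<in> carrier_vec n" "vnorm x \<noteq> 0"
  shows "((1 / complex_of_real (vnorm x)) \<cdot>\<^sub>v x) \<bullet>c ((1 / complex_of_real (vnorm x)) \<cdot>\<^sub>v x) = 1"
proof -
  let ?c = "1 / complex_of_real (vnorm x)"
  have "(?c \<cdot>\<^sub>v x) \<bullet>c (?c \<cdot>\<^sub>v x) = ?c * (cnj ?c * (x \<bullet>c x))"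
    using assms by (simp add: cscalar_prod_smult_right[of _ n])
  also have "x \<bullet>c x = complex_of_real (vnorm x ^ 2)"
    by (rule cscalar_prod_self[OF assms(1)])
  finally show ?thesis
    using assms(2) by (simp add: power2_eq_square)
qed

lemma mat_adjoint_index:
  fixes A :: "complex mat"
  assumes "i < dim_col A" "j < dim_row A"
  shows "mat_adjoint A $$ (i, j) = cnj (A $$ (j, i))"
  using assms unfolding mat_adjoint_def by (simp add: mat_of_rows_def)

lemma mat_adjoint_carrier: "A \<in> carrier_mat n m \<Longrightarrow> mat_adjoint A \<in> carrier_mat m n"
  by (auto simp: mat_adjoint_def mat_of_rows_def)

lemma cscalar_prod_mat_adjoint:
  fixes A :: "complex mat"
  assumes A: "A \<in> carrier_mat n m" and x: "x \<in> carrier_vec m" and y: "y \<in> carrier_vec n"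
  shows "(A *\<^sub>v x) \<bullet>c y = x \<bullet>c (mat_adjoint A *\<^sub>v y)"
proof -
  have "(A *\<^sub>v x) \<bullet>c y = (\<Sum>i<n. \<Sum>a<m. x $ a * (A $$ (i, a) * cnj (y $ i)))"
    using A x y
    by (auto simp: scalar_prod_def lessThan_atLeast0 sum_distrib_left mult_ac intro!: sum.cong)
  also have "\<dots> = (\<Sum>a<m. x $ a * (\<Sum>i<n. A $$ (i, a) * cnj (y $ i)))"
    by (subst sum.swap) (simp add: sum_distrib_left)
  also have "\<dots> = x \<bullet>c (mat_adjoint A *\<^sub>v y)"
    using A x y mat_adjoint_carrier[OF A]
    by (auto simp: scalar_prod_def lessThan_atLeast0 mat_adjoint_index cnj_sum mult.commute intro!: sum.cong)
  finally show ?thesis .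
qed

lemma isometry_cscalar_prod:
  fixes V :: "complex mat"
  assumes V: "V \<in> carrier_mat n n" "mat_adjoint V * V = 1\<^sub>m n"
    and x: "x \<in> carrier_vec n" and y: "y \<in> carrier_vec n"
  shows "(V *\<^sub>v x) \<bullet>c (V *\<^sub>v y) = x \<bullet>c y"
proof -
  have "mat_adjoint V *\<^sub>v (V *\<^sub>v y) = (mat_adjoint V * V) *\<^sub>v y"
    by (rule assoc_mult_mat_vec[symmetric, OF mat_adjoint_carrier[OF V(1)] V(1) y])
  also have "\<dots> = y"
    using V(2) y by simp
  finally show ?thesis
    using cscalar_prod_mat_adjoint[OF V(1) x] V y by simp
qed

definition col_mat :: "nat \<Rightarrow> (nat \<Rightarrow> 'a vec) \<Rightarrow> nat \<Rightarrow> 'a mat" where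
  "col_mat n f j = mat n j (\<lambda>(r, c). f c $ r)"

definition col_span :: "nat \<Rightarrow> (nat \<Rightarrow> 'a :: semiring_0 vec) \<Rightarrow> nat \<Rightarrow> 'a vec set" where
  "col_span n f j = (*\<^sub>v) (col_mat n f j) ` carrier_vec j"

definition vec_subspace :: "nat \<Rightarrow> 'a :: field vec set \<Rightarrow> bool" where
  "vec_subspace n W \<longleftrightarrow> W \<subseteq> carrier_vec n \<and> 0\<^sub>v n \<in> W \<and>
     (\<forall>x\<in>W. \<forall>y\<in>W. x + y \<in> W) \<and> (\<forall>x\<in>W. \<forall>c. c \<cdot>\<^sub>v x \<in> W)"

lemma col_mat_carrier [simp]: "col_mat n f j \<in> carrier_mat n j"
  and col_mat_dim [simp]: "dim_row (col_mat n f j) = n" "dim_col (col_mat n f j) = j"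
  by (simp_all add: col_mat_def)

lemma col_mat_mult_vec_carrier [simp]: "col_mat n f j *\<^sub>v a \<in> carrier_vec n"
  by (simp add: carrier_vecI)

lemma col_mat_mult_vec:
  fixes f :: "nat \<Rightarrow> 'a :: comm_semiring_0 vec"
  assumes "a \<in> carrier_vec j"
  shows "col_mat n f j *\<^sub>v a = vec n (\<lambda>r. \<Sum>c<j. f c $ r * a $ c)"
  using assms unfolding col_mat_def
  by (auto simp: scalar_prod_def lessThan_atLeast0 intro!: eq_vecI sum.cong)

lemma col_mat_mult_vec_Suc:
  fixes f :: "nat \<Rightarrow> 'a :: comm_semiring_0 vec"
  assumes "a \<in> carrier_vec (Suc j)" "f j \<in> carrier_vec n"
  shows "col_mat n f (Suc j) *\<^sub>v a = col_mat n f j *\<^sub>v vec j (\<lambda>i. a $ i) + a $ j \<cdot>\<^sub>v f j"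
  using assms by (auto simp: col_mat_mult_vec mult.commute intro!: eq_vecI)

lemma col_mat_mult_unit_vec:
  fixes f :: "nat \<Rightarrow> 'a :: comm_semiring_1 vec"
  assumes "c < j" "f c \<in> carrier_vec n"
  shows "col_mat n f j *\<^sub>v unit_vec j c = f c"
proof -
  have "(\<Sum>c'<j. f c' $ r * unit_vec j c $ c') = f c $ r" for r
    using assms(1) by (simp add: unit_vec_def if_distrib cong: if_cong)
  then show ?thesis
    using assms by (auto simp: col_mat_mult_vec intro!: eq_vecI)
qed

lemma mat_mult_col_mat:
  fixes M :: "'a :: comm_semiring_0 mat"
  assumes "M \<in> carrier_mat n n" "\<forall>c<j. f c \<in> carrier_vec n"
  shows "M * col_mat n f j = col_mat n (\<lambda>c. M *\<^sub>v f c) j"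
  using assms unfolding col_mat_def by (auto simp: col_def scalar_prod_def intro!: eq_matI)

lemma col_mat_mult_upper_bidiagonal:
  fixes B :: "'a :: comm_semiring_0 mat"
  assumes B: "B \<in> carrier_mat j j"
    and band: "\<And>p c. p < j \<Longrightarrow> c < j \<Longrightarrow> p \<noteq> c \<Longrightarrow> p + 1 \<noteq> c \<Longrightarrow> B $$ (p, c) = 0"
  shows "col_mat n f j * B = mat n j (\<lambda>(r, c). f c $ r * B $$ (c, c)
           + (if c = 0 then 0 else f (c - 1) $ r * B $$ (c - 1, c)))"
proof (rule eq_matI)
  fix r c assume "r < dim_row (mat n j (\<lambda>(r, c). f c $ r * B $$ (c, c)
           + (if c = 0 then 0 else f (c - 1) $ r * B $$ (c - 1, c))))"
    "c < dim_col (mat n j (\<lambda>(r, c). f c $ r * B $$ (c, c)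
           + (if c = 0 then 0 else f (c - 1) $ r * B $$ (c - 1, c))))"
  then have rc: "r < n" "c < j" by auto
  have "(col_mat n f j * B) $$ (r, c) = (\<Sum>p<j. f p $ r * B $$ (p, c))"
    using rc B unfolding col_mat_def by (simp add: scalar_prod_def lessThan_atLeast0 col_def)
  also have "\<dots> = (\<Sum>p<j. (if p = c then f c $ r * B $$ (c, c) else 0)
                        + (if p + 1 = c then f p $ r * B $$ (p, c) else 0))"
    using rc band by (intro sum.cong) auto
  also have "\<dots> = f c $ r * B $$ (c, c) + (if c = 0 then 0 else f (c - 1) $ r * B $$ (c - 1, c))"
  proof -
    have "(\<Sum>p<j. if p + 1 = c then f p $ r * B $$ (p, c) else 0)
        = (\<Sum>p<j. if p = c - 1 \<and> c \<noteq> 0 then f (c - 1) $ r * B $$ (c - 1, c) else 0)"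
      by (intro sum.cong) auto
    then show ?thesis
      using rc by (cases c) (simp_all add: sum.distrib)
  qed
  finally show "(col_mat n f j * B) $$ (r, c) = mat n j (\<lambda>(r, c). f c $ r * B $$ (c, c)
           + (if c = 0 then 0 else f (c - 1) $ r * B $$ (c - 1, c))) $$ (r, c)"
    using rc by simp
qed (use B in auto)

lemma col_mat_mult_vec_cscalar_prod:
  fixes x :: "complex vec"
  assumes "a \<in> carrier_vec j" "x \<in> carrier_vec n"
  shows "(col_mat n f j *\<^sub>v a) \<bullet>c x = (\<Sum>c<j. a $ c * (f c \<bullet>c x))"
proof -
  have "(col_mat n f j *\<^sub>v a) \<bullet>c x = (\<Sum>r<n. \<Sum>c<j. a $ c * (f c $ r * cnj (x $ r)))"
    using assms by (auto simp: col_mat_mult_vec scalar_prod_def lessThan_atLeast0 sum_distrib_left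
        mult_ac intro!: sum.cong)
  also have "\<dots> = (\<Sum>c<j. a $ c * (f c \<bullet>c x))"
    using assms by (subst sum.swap) (simp add: scalar_prod_def lessThan_atLeast0 sum_distrib_left)
  finally show ?thesis .
qed

lemma cscalar_prod_col_span_eq_0:
  fixes x :: "complex vec"
  assumes x: "x \<in> carrier_vec n" and f: "\<And>c. c < j \<Longrightarrow> f c \<in> carrier_vec n \<and> x \<bullet>c f c = 0"
    and s: "s \<in> col_span n f j"
  shows "x \<bullet>c s = 0"
proof -
  obtain a where a: "a \<in> carrier_vec j" "s = col_mat n f j *\<^sub>v a"
    using s unfolding col_span_def by auto
  have "f c \<bullet>c x = 0" if "c < j" for c
    using f[OF that] cscalar_prod_swap[of "f c" n x] x by simp
  then have "s \<bullet>c x = 0"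
    unfolding a(2) col_mat_mult_vec_cscalar_prod[OF a(1) x] by simp
  then show ?thesis
    using cscalar_prod_swap[of x n s] x mult_mat_vec_carrier[OF col_mat_carrier a(1)] a(2) by simp
qed

lemma vec_subspaceD:
  assumes "vec_subspace n W"
  shows "W \<subseteq> carrier_vec n" "0\<^sub>v n \<in> W" "x \<in> W \<Longrightarrow> y \<in> W \<Longrightarrow> x + y \<in> W"
    "x \<in> W \<Longrightarrow> c \<cdot>\<^sub>v x \<in> W"
  using assms unfolding vec_subspace_def by auto

lemma vec_subspace_diff:
  assumes W: "vec_subspace n W" and "x \<in> W" "y \<in> W"
  shows "x - y \<in> W"
proof -
  have "x - y = x + (-1) \<cdot>\<^sub>v y"
    using assms vec_subspaceD(1)[OF W] by (auto intro!: eq_vecI)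
  moreover have "x + (-1) \<cdot>\<^sub>v y \<in> W"
    using assms by (intro vec_subspaceD(3,4)[OF W])
  ultimately show ?thesis
    by simp
qed

lemma col_span_subspace:
  fixes f :: "nat \<Rightarrow> 'a :: field vec"
  shows "vec_subspace n (col_span n f j)"
  unfolding vec_subspace_def
proof (intro conjI ballI allI)
  let ?M = "col_mat n f j"
  show "col_span n f j \<subseteq> carrier_vec n"
    unfolding col_span_def by auto
  show "0\<^sub>v n \<in> col_span n f j"
    unfolding col_span_def by (rule image_eqI[of _ _ "0\<^sub>v j"]) auto
  fix x y c assume x: "x \<in> col_span n f j"
  then obtain a where a: "a \<in> carrier_vec j" "x = ?M *\<^sub>v a"
    unfolding col_span_def by auto
  show "c \<cdot>\<^sub>v x \<in> col_span n f j"
    unfolding col_span_def a(2)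
    by (rule image_eqI[of _ _ "c \<cdot>\<^sub>v a"]) (use a(1) mult_mat_vec[of ?M n j] in auto)
  assume "y \<in> col_span n f j"
  then obtain a' where a': "a' \<in> carrier_vec j" "y = ?M *\<^sub>v a'"
    unfolding col_span_def by auto
  show "x + y \<in> col_span n f j"
    unfolding col_span_def a(2) a'(2)
    by (rule image_eqI[of _ _ "a + a'"]) (use a(1) a'(1) mult_add_distrib_mat_vec[of ?M n j] in auto)
qed

lemma col_span_subset:
  fixes f :: "nat \<Rightarrow> 'a :: field vec"
  assumes W: "vec_subspace n W" and f: "\<And>c. c < j \<Longrightarrow> f c \<in> W"
  shows "col_span n f j \<subseteq> W"
  using f
proof (induction j)
  case 0
  have "col_mat n f 0 *\<^sub>v a = 0\<^sub>v n" if "a \<in> carrier_vec 0" for a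
    using that by (auto simp: scalar_prod_def intro!: eq_vecI)
  then show ?case
    using vec_subspaceD(2)[OF W] unfolding col_span_def by auto
next
  case (Suc j)
  have fj: "f j \<in> W" "f j \<in> carrier_vec n"
    using Suc.prems vec_subspaceD(1)[OF W] by auto
  have "col_span n f j \<subseteq> W"
    using Suc by simp
  moreover have "col_mat n f j *\<^sub>v vec j (\<lambda>i. a $ i) \<in> col_span n f j" for a
    unfolding col_span_def by (rule imageI) simp
  ultimately have IH: "col_mat n f j *\<^sub>v vec j (\<lambda>i. a $ i) \<in> W" for a
    by auto
  show ?case
  proof
    fix s assume "s \<in> col_span n f (Suc j)"
    then obtain a where a: "a \<in> carrier_vec (Suc j)" "s = col_mat n f (Suc j) *\<^sub>v a"
      unfolding col_span_def by auto
    show "s \<in> W"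
      unfolding a(2) col_mat_mult_vec_Suc[where f = f, OF a(1) fj(2)]
      by (intro vec_subspaceD(3,4)[OF W] fj(1) IH)
  qed
qed

lemma col_in_col_span:
  fixes f :: "nat \<Rightarrow> 'a :: field vec"
  assumes "c < j" "f c \<in> carrier_vec n"
  shows "f c \<in> col_span n f j"
proof -
  have "f c = col_mat n f j *\<^sub>v unit_vec j c"
    using col_mat_mult_unit_vec[of c j f n] assms by simp
  then show ?thesis
    unfolding col_span_def by (rule image_eqI[of _ _ "unit_vec j c"]) simp_all
qed

lemma col_span_mono:
  fixes f :: "nat \<Rightarrow> 'a :: field vec"
  assumes "j \<le> j'" "\<And>c. c < j' \<Longrightarrow> f c \<in> carrier_vec n"
  shows "col_span n f j \<subseteq> col_span n f j'"
proof (rule col_span_subset[OF col_span_subspace])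
  fix c assume "c < j"
  then show "f c \<in> col_span n f j'"
    using assms by (intro col_in_col_span) auto
qed

lemma mat_mult_vec_col_span:
  fixes M :: "'a :: field mat"
  assumes M: "M \<in> carrier_mat n n" and f: "\<And>c. c < j \<Longrightarrow> f c \<in> carrier_vec n"
    and W: "vec_subspace n W" and MfW: "\<And>c. c < j \<Longrightarrow> M *\<^sub>v f c \<in> W"
    and s: "s \<in> col_span n f j"
  shows "M *\<^sub>v s \<in> W"
proof -
  obtain a where a: "a \<in> carrier_vec j" "s = col_mat n f j *\<^sub>v a"
    using s unfolding col_span_def by auto
  have "M *\<^sub>v s = (M * col_mat n f j) *\<^sub>v a"
    using a assoc_mult_mat_vec[OF M col_mat_carrier[of n f j] a(1)] by simp
  also have "\<dots> = col_mat n (\<lambda>c. M *\<^sub>v f c) j *\<^sub>v a"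
    using M f by (simp add: mat_mult_col_mat)
  also have "\<dots> \<in> col_span n (\<lambda>c. M *\<^sub>v f c) j"
    unfolding col_span_def using a(1) by (rule imageI)
  finally have "M *\<^sub>v s \<in> col_span n (\<lambda>c. M *\<^sub>v f c) j" .
  moreover have "col_span n (\<lambda>c. M *\<^sub>v f c) j \<subseteq> W"
    by (rule col_span_subset[OF W MfW])
  ultimately show ?thesis
    by auto
qed

lemma Qmat_carrier [simp]: "Qmat q n j \<in> carrier_mat n j"
  and Qmat_dim [simp]: "dim_row (Qmat q n j) = n" "dim_col (Qmat q n j) = j"
  by (simp_all add: Qmat_def)

lemma Umat_carrier [simp]: "Umat u j \<in> carrier_mat j j"
  unfolding Umat_def by (rule mat_carrier)

lemma Lmat_carrier [simp]: "Lmat l j \<in> carrier_mat j j"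
  unfolding Lmat_def by (rule mat_carrier)

lemma Umat_dim [simp]: "dim_row (Umat u j) = j" "dim_col (Umat u j) = j"
  and Lmat_dim [simp]: "dim_row (Lmat l j) = j" "dim_col (Lmat l j) = j"
  by (simp_all add: Umat_def Lmat_def)

lemma Tmat_carrier [simp]: "Tmat c1 c2 u l j \<in> carrier_mat j j"
  unfolding Tmat_def by simp

lemma Tmat_dim [simp]: "dim_row (Tmat c1 c2 u l j) = j" "dim_col (Tmat c1 c2 u l j) = j"
  unfolding Tmat_def by simp_all

lemma Umat_index: "r < j \<Longrightarrow> c < j \<Longrightarrow>
    Umat u j $$ (r, c) = (if r = c then 1 else if c = r + 1 then u (r + 1) (c + 1) else 0)"
  unfolding Umat_def by simp

lemma Lmat_index: "r < j \<Longrightarrow> c < j \<Longrightarrow>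
    Lmat l j $$ (r, c) = (if r = c then l (r + 1) (r + 1) else if r = c + 1 then l (r + 1) (c + 1) else 0)"
  unfolding Lmat_def by simp

lemma Tmat_index:
  assumes "r < j" "c < j"
  shows "Tmat c1 c2 u l j $$ (r, c) =
    complex_of_real c1 * (if r = c then 1 else if c = r + 1 then u (r + 1) (c + 1) else 0)
    + complex_of_real c2 * (if r = c then l (r + 1) (r + 1) else if r = c + 1 then l (r + 1) (c + 1) else 0)"
  using assms unfolding Tmat_def by (simp add: Umat_index Lmat_index)

lemma lead_sub_Tmat: "j \<le> k \<Longrightarrow> lead_sub (Tmat c1 c2 u l k) j = Tmat c1 c2 u l j"
  by (rule eq_matI) (auto simp: Tmat_index)

lemma Tmat_tridiagonal:
  "i < k \<Longrightarrow> j < k \<Longrightarrow> i + 1 < j \<or> j + 1 < i \<Longrightarrow> Tmat c1 c2 u l k $$ (i, j) = 0"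
  by (auto simp: Tmat_index)

lemma det_Umat: "det (Umat u j) = 1"
proof -
  have "det (Umat u j) = prod_list (diag_mat (Umat u j))"
    by (rule det_upper_triangular) (auto simp: upper_triangular_def Umat_def)
  also have "\<dots> = 1"
    by (simp add: prod_list_diag_prod Umat_def)
  finally show ?thesis .
qed

section \<open>LU factorisation of a tridiagonal matrix\<close>

lemma sum_atMost_split_top:
  fixes f :: "nat \<Rightarrow> 'a :: comm_monoid_add"
  shows "(\<Sum>p\<le>m. f p) = f m + (\<Sum>p<m. f p)"
  using sum.lessThan_Suc[of f m] by (simp add: lessThan_Suc_atMost add.commute)

locale tridiagonal_LU =
  fixes k :: nat and T L U :: "complex mat"
  assumes L_carrier: "L \<in> carrier_mat k k" and U_carrier: "U \<in> carrier_mat k k"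
    and L_lower: "\<And>i j. i < k \<Longrightarrow> j < k \<Longrightarrow> i < j \<Longrightarrow> L $$ (i, j) = 0"
    and L_diag: "\<And>i. i < k \<Longrightarrow> L $$ (i, i) \<noteq> 0"
    and U_upper: "\<And>i j. i < k \<Longrightarrow> j < i \<Longrightarrow> U $$ (i, j) = 0"
    and U_diag: "\<And>i. i < k \<Longrightarrow> U $$ (i, i) = 1"
    and T_LU: "T = L * U"
    and T_tridiagonal: "\<And>i j. i < k \<Longrightarrow> j < k \<Longrightarrow> i + 1 < j \<or> j + 1 < i \<Longrightarrow> T $$ (i, j) = 0"
begin

lemma LU_sum_truncate:
  assumes "r < j" "c < j" "j \<le> k"
  shows "(\<Sum>p<j. L $$ (r, p) * U $$ (p, c)) = (\<Sum>p\<le>min r c. L $$ (r, p) * U $$ (p, c))"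
proof (rule sum.mono_neutral_right)
  show "\<forall>p\<in>{..<j} - {..min r c}. L $$ (r, p) * U $$ (p, c) = 0"
  proof
    fix p assume p: "p \<in> {..<j} - {..min r c}"
    then have "r < p \<or> c < p"
      by auto
    then show "L $$ (r, p) * U $$ (p, c) = 0"
      using L_lower[of r p] U_upper[of p c] p assms by auto
  qed
qed (use assms in auto)

lemma T_entry:
  assumes "r < k" "c < k"
  shows "T $$ (r, c) = (\<Sum>p\<le>min r c. L $$ (r, p) * U $$ (p, c))"
proof -
  have "T $$ (r, c) = (\<Sum>p<k. L $$ (r, p) * U $$ (p, c))"
    unfolding T_LU using L_carrier U_carrier assms by (simp add: scalar_prod_def lessThan_atLeast0)
  then show ?thesis
    using LU_sum_truncate[OF assms order_refl] by simp
qed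

lemma L_band: "i < k \<Longrightarrow> m + 1 < i \<Longrightarrow> L $$ (i, m) = 0"
proof (induction m rule: less_induct)
  case (less m)
  have "T $$ (i, m) = L $$ (i, m) * U $$ (m, m) + (\<Sum>p<m. L $$ (i, p) * U $$ (p, m))"
    using T_entry[of i m] less.prems by (simp add: min_def sum_atMost_split_top)
  moreover have "(\<Sum>p<m. L $$ (i, p) * U $$ (p, m)) = 0"
    using less by (intro sum.neutral) auto
  ultimately show ?case
    using T_tridiagonal[of i m] U_diag[of m] less.prems by simp
qed

lemma U_band: "i < k \<Longrightarrow> m + 1 < i \<Longrightarrow> U $$ (m, i) = 0"
proof (induction m rule: less_induct)
  case (less m)
  have "T $$ (m, i) = L $$ (m, m) * U $$ (m, i) + (\<Sum>p<m. L $$ (m, p) * U $$ (p, i))"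
    using T_entry[of m i] less.prems by (simp add: min_def sum_atMost_split_top)
  moreover have "(\<Sum>p<m. L $$ (m, p) * U $$ (p, i)) = 0"
    using less by (intro sum.neutral) auto
  ultimately show ?case
    using T_tridiagonal[of m i] L_diag[of m] less.prems by simp
qed

lemma L_diag_first: "0 < k \<Longrightarrow> L $$ (0, 0) = T $$ (0, 0)"
  using T_entry[of 0 0] U_diag[of 0] by simp

lemma L_sub_diag:
  assumes "1 \<le> i" "i < k"
  shows "L $$ (i, i - 1) = T $$ (i, i - 1)"
proof -
  have "min i (i - 1) = i - 1"
    by simp
  then have "T $$ (i, i - 1) = L $$ (i, i - 1) * U $$ (i - 1, i - 1) + (\<Sum>p<i - 1. L $$ (i, p) * U $$ (p, i - 1))"
    using T_entry[of i "i - 1"] assms by (simp add: sum_atMost_split_top)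
  moreover have "(\<Sum>p<i - 1. L $$ (i, p) * U $$ (p, i - 1)) = 0"
    using assms L_band by (intro sum.neutral) auto
  ultimately show ?thesis
    using U_diag[of "i - 1"] assms by simp
qed

lemma U_super_diag:
  assumes "1 \<le> i" "i < k"
  shows "U $$ (i - 1, i) = T $$ (i - 1, i) / L $$ (i - 1, i - 1)"
proof -
  have "min (i - 1) i = i - 1"
    by simp
  then have "T $$ (i - 1, i) = L $$ (i - 1, i - 1) * U $$ (i - 1, i) + (\<Sum>p<i - 1. L $$ (i - 1, p) * U $$ (p, i))"
    using T_entry[of "i - 1" i] assms by (simp add: sum_atMost_split_top)
  moreover have "(\<Sum>p<i - 1. L $$ (i - 1, p) * U $$ (p, i)) = 0"
    using assms U_band by (intro sum.neutral) auto
  ultimately show ?thesis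
    using L_diag[of "i - 1"] assms by (simp add: field_simps)
qed

lemma L_diag_recurrence:
  assumes "1 \<le> i" "i < k"
  shows "L $$ (i, i) = T $$ (i, i) - T $$ (i, i - 1) * T $$ (i - 1, i) / L $$ (i - 1, i - 1)"
proof -
  have "(\<Sum>p<i. L $$ (i, p) * U $$ (p, i)) = L $$ (i, i - 1) * U $$ (i - 1, i) + (\<Sum>p<i - 1. L $$ (i, p) * U $$ (p, i))"
    using sum_atMost_split_top[of "\<lambda>p. L $$ (i, p) * U $$ (p, i)" "i - 1"] assms
    by (simp add: lessThan_Suc_atMost[symmetric])
  moreover have "(\<Sum>p<i - 1. L $$ (i, p) * U $$ (p, i)) = 0"
    using assms L_band by (intro sum.neutral) auto
  ultimately have "T $$ (i, i) = L $$ (i, i - 1) * U $$ (i - 1, i) + L $$ (i, i)"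
    using T_entry[of i i] U_diag[of i] assms by (simp add: sum_atMost_split_top)
  then show ?thesis
    using L_sub_diag[OF assms] U_super_diag[OF assms] by simp
qed

lemma lead_sub_LU:
  assumes j: "j \<le> k"
  shows "lead_sub T j = lead_sub L j * lead_sub U j"
proof (rule eq_matI)
  fix r c assume "r < dim_row (lead_sub L j * lead_sub U j)" "c < dim_col (lead_sub L j * lead_sub U j)"
  then have rc: "r < j" "c < j"
    by auto
  have "(lead_sub L j * lead_sub U j) $$ (r, c) = (\<Sum>p<j. L $$ (r, p) * U $$ (p, c))"
    using rc by (simp add: scalar_prod_def lessThan_atLeast0)
  also have "\<dots> = T $$ (r, c)"
    using LU_sum_truncate[OF rc j] T_entry[of r c] rc j by simp
  finally show "lead_sub T j $$ (r, c) = (lead_sub L j * lead_sub U j) $$ (r, c)"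
    using rc by simp
qed auto

lemma det_lead_sub_U: "j \<le> k \<Longrightarrow> det (lead_sub U j) = 1"
proof -
  assume j: "j \<le> k"
  have "det (lead_sub U j) = prod_list (diag_mat (lead_sub U j))"
    by (rule det_upper_triangular) (use U_upper j in \<open>auto simp: upper_triangular_def\<close>)
  also have "\<dots> = 1"
    using U_diag j by (simp add: prod_list_diag_prod)
  finally show ?thesis .
qed

lemma det_lead_sub_L: "j \<le> k \<Longrightarrow> det (lead_sub L j) \<noteq> 0"
proof -
  assume j: "j \<le> k"
  have "det (lead_sub L j) = prod_list (diag_mat (lead_sub L j))"
    by (rule det_lower_triangular[OF _ lead_sub_carrier]) (use L_lower j in auto)
  then show ?thesis
    using L_diag j by (simp add: prod_list_diag_prod)
qed

lemma det_lead_sub_T: "j \<le> k \<Longrightarrow> det (lead_sub T j) \<noteq> 0"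
  using det_lead_sub_U det_lead_sub_L by (simp add: lead_sub_LU det_mult[of _ j])

lemma lead_sub_U_bidiagonal:
  "j \<le> k \<Longrightarrow> p < j \<Longrightarrow> c < j \<Longrightarrow> p \<noteq> c \<Longrightarrow> p + 1 \<noteq> c \<Longrightarrow> lead_sub U j $$ (p, c) = 0"
  using U_upper U_band by (cases "c < p") auto

lemma lead_sub_L_mult_vec:
  assumes "j \<le> k" "r < j" "y \<in> carrier_vec j"
  shows "(lead_sub L j *\<^sub>v y) $ r = L $$ (r, r) * y $ r + (if r = 0 then 0 else L $$ (r, r - 1) * y $ (r - 1))"
proof -
  have "(lead_sub L j *\<^sub>v y) $ r = (\<Sum>c<j. L $$ (r, c) * y $ c)"
    using assms by (simp add: scalar_prod_def lessThan_atLeast0)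
  also have "\<dots> = (\<Sum>c<j. (if c = r then L $$ (r, r) * y $ r else 0)
                        + (if c + 1 = r then L $$ (r, c) * y $ c else 0))"
  proof (intro sum.cong refl)
    fix c assume "c \<in> {..<j}"
    then consider "c = r" | "c + 1 = r" | "r < c" | "c + 1 < r"
      by linarith
    then show "L $$ (r, c) * y $ c = (if c = r then L $$ (r, r) * y $ r else 0)
        + (if c + 1 = r then L $$ (r, c) * y $ c else 0)"
      using assms \<open>c \<in> {..<j}\<close> L_lower[of r c] L_band[of r c] by cases auto
  qed
  also have "\<dots> = L $$ (r, r) * y $ r + (if r = 0 then 0 else L $$ (r, r - 1) * y $ (r - 1))"
  proof -
    have "(\<Sum>c<j. if c + 1 = r then L $$ (r, c) * y $ c else 0)
        = (\<Sum>c<j. if c = r - 1 \<and> r \<noteq> 0 then L $$ (r, r - 1) * y $ (r - 1) else 0)"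
      by (intro sum.cong) auto
    then show ?thesis
      using assms by (cases r) (simp_all add: sum.distrib)
  qed
  finally show ?thesis .
qed

lemma lead_sub_U_mult_vec_last:
  assumes "1 \<le> j" "j \<le> k" "y \<in> carrier_vec j"
  shows "(lead_sub U j *\<^sub>v y) $ (j - 1) = y $ (j - 1)"
proof -
  have "(lead_sub U j *\<^sub>v y) $ (j - 1) = (\<Sum>c<j. U $$ (j - 1, c) * y $ c)"
    using assms by (simp add: scalar_prod_def lessThan_atLeast0)
  also have "\<dots> = (\<Sum>c<j. if c = j - 1 then y $ c else 0)"
    using assms U_upper U_diag by (intro sum.cong) auto
  finally show ?thesis
    using assms by simp
qed

end

section \<open>The unitary Arnoldi process\<close>

locale unitary_arnoldi_run =
  fixes V :: "complex mat" and N k :: nat and b :: "complex vec"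
    and q v :: "nat \<Rightarrow> complex vec" and u l :: "nat \<Rightarrow> nat \<Rightarrow> complex"
  assumes V_carrier: "V \<in> carrier_mat N N" and V_isometry: "mat_adjoint V * V = 1\<^sub>m N"
    and b_carrier: "b \<in> carrier_vec N" and b_nonzero: "b \<noteq> 0\<^sub>v N"
    and arnoldi: "unitary_arnoldi V b k q v u l"
begin

lemma arnoldi_init: "q 0 = 0\<^sub>v N" "v 0 = 0\<^sub>v N" "u 0 1 = 0"
  "q 1 = (1 / complex_of_real (vnorm b)) \<cdot>\<^sub>v b"
  using arnoldi V_carrier unfolding unitary_arnoldi_def by auto

lemma arnoldi_step:
  assumes "1 \<le> j" "j \<le> k"
  shows "v j = V *\<^sub>v q j"
    and "1 < j \<Longrightarrow> v (j - 1) \<bullet>c q (j - 1) \<noteq> 0"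
    and "1 < j \<Longrightarrow> u (j - 1) j = - (v j \<bullet>c q (j - 1)) / (v (j - 1) \<bullet>c q (j - 1))"
    and "l j j = v j \<bullet>c q j + u (j - 1) j * (v (j - 1) \<bullet>c q j)"
    and "vnorm (v j - l j j \<cdot>\<^sub>v q j + u (j - 1) j \<cdot>\<^sub>v v (j - 1)) \<noteq> 0"
    and "l (j + 1) j = complex_of_real (vnorm (v j - l j j \<cdot>\<^sub>v q j + u (j - 1) j \<cdot>\<^sub>v v (j - 1)))"
    and "q (j + 1) = (1 / l (j + 1) j) \<cdot>\<^sub>v (v j - l j j \<cdot>\<^sub>v q j + u (j - 1) j \<cdot>\<^sub>v v (j - 1))"
  using arnoldi[unfolded unitary_arnoldi_def Let_def, THEN conjunct2, THEN conjunct2,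
      THEN conjunct2, THEN conjunct2, rule_format, of j] assms
  by auto

lemma v_eq: "j \<le> k \<Longrightarrow> v j = V *\<^sub>v q j"
  using arnoldi_step(1)[of j] arnoldi_init(1,2) V_carrier by (cases "j = 0") auto

lemma v_carrier: "j \<le> k \<Longrightarrow> v j \<in> carrier_vec N"
  using v_eq[of j] V_carrier by (auto intro!: carrier_vecI)

lemma q_carrier: "j \<le> k + 1 \<Longrightarrow> q j \<in> carrier_vec N"
proof (cases "j \<le> 1")
  case True
  then consider "j = 0" | "j = 1"
    by linarith
  then show ?thesis
    using arnoldi_init b_carrier by cases simp_all
next
  case False
  assume "j \<le> k + 1"
  then have "1 \<le> j - 1" "j - 1 \<le> k" "j = j - 1 + 1"
    using False by auto
  then show ?thesis
    using arnoldi_step(7)[of "j - 1"] v_carrier[of "j - 1 - 1"] by (auto intro!: carrier_vecI)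
qed

definition QU_col :: "nat \<Rightarrow> complex vec" where
  "QU_col j = q j + u (j - 1) j \<cdot>\<^sub>v q (j - 1)"

lemma QU_col_carrier: "j \<le> k + 1 \<Longrightarrow> QU_col j \<in> carrier_vec N"
  unfolding QU_col_def using q_carrier[of j] q_carrier[of "j - 1"] by simp

lemma QU_col_1: "QU_col 1 = q 1"
  unfolding QU_col_def using arnoldi_init q_carrier[of 1] by (auto intro!: eq_vecI)

lemma V_QU_col:
  assumes "1 \<le> j" "j \<le> k"
  shows "V *\<^sub>v QU_col j = v j + u (j - 1) j \<cdot>\<^sub>v v (j - 1)"
proof -
  have "V *\<^sub>v QU_col j = V *\<^sub>v q j + u (j - 1) j \<cdot>\<^sub>v (V *\<^sub>v q (j - 1))"
    unfolding QU_col_def using q_carrier[of j] q_carrier[of "j - 1"] assms V_carrier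
    by (simp add: mult_add_distrib_mat_vec[of _ N N] mult_mat_vec[of _ N N])
  then show ?thesis
    using v_eq[of j] v_eq[of "j - 1"] assms by simp
qed

lemma arnoldi_next:
  assumes "1 \<le> j" "j \<le> k"
  shows "l (j + 1) j = complex_of_real (vnorm (V *\<^sub>v QU_col j - l j j \<cdot>\<^sub>v q j))"
    and "l (j + 1) j \<noteq> 0"
    and "q (j + 1) = (1 / l (j + 1) j) \<cdot>\<^sub>v (V *\<^sub>v QU_col j - l j j \<cdot>\<^sub>v q j)"
proof -
  have "v j \<in> carrier_vec N" "v (j - 1) \<in> carrier_vec N" "q j \<in> carrier_vec N"
    using assms v_carrier q_carrier by auto
  then have "v j - l j j \<cdot>\<^sub>v q j + u (j - 1) j \<cdot>\<^sub>v v (j - 1) = V *\<^sub>v QU_col j - l j j \<cdot>\<^sub>v q j"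
    unfolding V_QU_col[OF assms] by (auto intro!: eq_vecI)
  then show "l (j + 1) j = complex_of_real (vnorm (V *\<^sub>v QU_col j - l j j \<cdot>\<^sub>v q j))"
    and "l (j + 1) j \<noteq> 0"
    and "q (j + 1) = (1 / l (j + 1) j) \<cdot>\<^sub>v (V *\<^sub>v QU_col j - l j j \<cdot>\<^sub>v q j)"
    using arnoldi_step(5-7)[OF assms] by simp_all
qed

lemma arnoldi_relation:
  assumes "1 \<le> j" "j \<le> k"
  shows "V *\<^sub>v QU_col j = l j j \<cdot>\<^sub>v q j + l (j + 1) j \<cdot>\<^sub>v q (j + 1)"
  unfolding arnoldi_next(3)[OF assms]
  using V_carrier q_carrier[of j] assms arnoldi_next(2)[OF assms]
  by (intro eq_vecI) (auto simp: field_simps)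

lemma l_diag_eq:
  assumes "1 \<le> j" "j \<le> k"
  shows "l j j = (V *\<^sub>v QU_col j) \<bullet>c q j"
proof -
  have "v j \<in> carrier_vec N" "v (j - 1) \<in> carrier_vec N" "q j \<in> carrier_vec N"
    using assms v_carrier q_carrier by auto
  then show ?thesis
    unfolding V_QU_col[OF assms] arnoldi_step(4)[OF assms]
    by (simp add: cscalar_prod_add_left[of _ N] cscalar_prod_smult_left[of _ N])
qed

lemma V_QU_col_orth_prev:
  assumes "1 < j" "j \<le> k"
  shows "(V *\<^sub>v QU_col j) \<bullet>c q (j - 1) = 0"
proof -
  have j: "1 \<le> j"
    using assms by simp
  have "v j \<in> carrier_vec N" "v (j - 1) \<in> carrier_vec N" "q (j - 1) \<in> carrier_vec N"
    using assms v_carrier q_carrier by auto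
  then have "(V *\<^sub>v QU_col j) \<bullet>c q (j - 1) = v j \<bullet>c q (j - 1) + u (j - 1) j * (v (j - 1) \<bullet>c q (j - 1))"
    unfolding V_QU_col[OF j assms(2)]
    by (simp add: cscalar_prod_add_left[of _ N] cscalar_prod_smult_left[of _ N])
  also have "\<dots> = 0"
    using arnoldi_step(2,3)[of j] assms by simp
  finally show ?thesis .
qed

lemma b_eq: "b = complex_of_real (vnorm b) \<cdot>\<^sub>v q 1"
  unfolding arnoldi_init(4) using b_carrier vnorm_pos[OF b_carrier b_nonzero]
  by (auto intro!: eq_vecI)

lemma q_norm: "1 \<le> j \<Longrightarrow> j \<le> k + 1 \<Longrightarrow> q j \<bullet>c q j = 1"
proof (cases "j = 1")
  case True
  then show ?thesis
    using cscalar_prod_normalized[OF b_carrier] vnorm_pos[OF b_carrier b_nonzero] arnoldi_init(4) by simp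
next
  case False
  assume "1 \<le> j" "j \<le> k + 1"
  then have j: "1 \<le> j - 1" "j - 1 \<le> k" "j = j - 1 + 1"
    using False by auto
  let ?w = "V *\<^sub>v QU_col (j - 1) - l (j - 1) (j - 1) \<cdot>\<^sub>v q (j - 1)"
  have "?w \<in> carrier_vec N"
    using V_carrier q_carrier[of "j - 1"] QU_col_carrier[of "j - 1"] j by simp
  moreover have "vnorm ?w \<noteq> 0" "q j = (1 / complex_of_real (vnorm ?w)) \<cdot>\<^sub>v ?w"
    using arnoldi_next[OF j(1,2)] j(3) by auto
  ultimately show ?thesis
    using cscalar_prod_normalized by simp
qed

abbreviation span_q :: "nat \<Rightarrow> complex vec set" where
  "span_q j \<equiv> col_span N (\<lambda>c. q (c + 1)) j"

lemma Qmat_col_mat: "Qmat q N j = col_mat N (\<lambda>c. q (c + 1)) j"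
  by (simp add: Qmat_def col_mat_def)

lemma q_in_span_q: "1 \<le> m \<Longrightarrow> m \<le> j \<Longrightarrow> j \<le> k + 1 \<Longrightarrow> q m \<in> span_q j"
  using col_in_col_span[of "m - 1" j "\<lambda>c. q (c + 1)" N] q_carrier[of m] by simp

lemma span_q_mono: "j \<le> j' \<Longrightarrow> j' \<le> k + 1 \<Longrightarrow> span_q j \<subseteq> span_q j'"
  by (rule col_span_mono) (auto intro: q_carrier)

lemma span_q_carrier: "s \<in> span_q j \<Longrightarrow> s \<in> carrier_vec N"
  using vec_subspaceD(1)[OF col_span_subspace] by blast

lemma QU_col_in_span_q:
  assumes "1 \<le> m" "m \<le> j" "j \<le> k + 1"
  shows "QU_col m \<in> span_q j"
proof (cases "m = 1")
  case True
  then show ?thesis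
    using QU_col_1 q_in_span_q assms by simp
next
  case False
  then have "q m \<in> span_q j" "q (m - 1) \<in> span_q j"
    using assms q_in_span_q by auto
  then show ?thesis
    unfolding QU_col_def by (intro vec_subspaceD(3,4)[OF col_span_subspace])
qed

lemma cscalar_prod_span_q_eq_0:
  assumes "x \<in> carrier_vec N" "j \<le> k + 1" "\<And>m. 1 \<le> m \<Longrightarrow> m \<le> j \<Longrightarrow> x \<bullet>c q m = 0"
    and "s \<in> span_q j"
  shows "x \<bullet>c s = 0"
  by (rule cscalar_prod_col_span_eq_0[OF assms(1) _ assms(4)]) (use assms q_carrier in auto)

lemma q_Suc_decomp:
  assumes i: "1 \<le> i" "i \<le> k" and s: "s \<in> carrier_vec N" and q_i: "q i = c \<cdot>\<^sub>v q 1 + V *\<^sub>v s"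
  shows "q (i + 1) = (- l i i * c / l (i + 1) i) \<cdot>\<^sub>v q 1
    + V *\<^sub>v ((1 / l (i + 1) i) \<cdot>\<^sub>v (QU_col i - l i i \<cdot>\<^sub>v s))"
proof (rule eq_vecI)
  define L where "L = l (i + 1) i"
  fix r assume "r < dim_vec ((- l i i * c / l (i + 1) i) \<cdot>\<^sub>v q 1
    + V *\<^sub>v ((1 / l (i + 1) i) \<cdot>\<^sub>v (QU_col i - l i i \<cdot>\<^sub>v s)))"
  then have r: "r < N"
    using V_carrier by simp
  let ?y = "(V *\<^sub>v QU_col i) $ r" and ?z = "(V *\<^sub>v s) $ r"
  have "q (i + 1) $ r = (1 / L) * (?y - l i i * q i $ r)"
    using arnoldi_next(3)[OF i] r V_carrier q_carrier[of i] i unfolding L_def by simp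
  also have "q i $ r = c * q 1 $ r + ?z"
    using q_i r q_carrier[of 1] V_carrier s by simp
  also have "(1 / L) * (?y - l i i * (c * q 1 $ r + ?z)) = (- l i i * c / L) * q 1 $ r + (1 / L) * (?y - l i i * ?z)"
    by (simp add: divide_inverse algebra_simps)
  also have "(1 / L) * (?y - l i i * ?z) = (V *\<^sub>v ((1 / L) \<cdot>\<^sub>v (QU_col i - l i i \<cdot>\<^sub>v s))) $ r"
    using r V_carrier s QU_col_carrier[of i] i
    by (simp add: mult_mat_vec[of _ N N] mult_minus_distrib_mat_vec[of _ N N])
  finally show "q (i + 1) $ r = ((- l i i * c / l (i + 1) i) \<cdot>\<^sub>v q 1
      + V *\<^sub>v ((1 / l (i + 1) i) \<cdot>\<^sub>v (QU_col i - l i i \<cdot>\<^sub>v s))) $ r"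
    using r q_carrier[of 1] V_carrier unfolding L_def by simp
qed (use q_carrier[of 1] q_carrier[of "i + 1"] i V_carrier in simp)

lemma q_decomp:
  "1 \<le> i \<Longrightarrow> i \<le> k + 1 \<Longrightarrow> \<exists>c s. s \<in> span_q (i - 1) \<and> q i = c \<cdot>\<^sub>v q 1 + V *\<^sub>v s"
proof (induction i)
  case (Suc i)
  show ?case
  proof (cases "i = 0")
    case True
    have "q (Suc 0) = 1 \<cdot>\<^sub>v q 1 + V *\<^sub>v 0\<^sub>v N"
      using q_carrier[of 1] V_carrier by (auto intro!: eq_vecI)
    moreover have "0\<^sub>v N \<in> span_q (Suc 0 - 1)"
      using vec_subspaceD(2)[OF col_span_subspace] by simp
    ultimately show ?thesis
      using True by blast
  next
    case False
    then have i: "1 \<le> i" "i \<le> k"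
      using Suc.prems by auto
    obtain c s where cs: "s \<in> span_q (i - 1)" "q i = c \<cdot>\<^sub>v q 1 + V *\<^sub>v s"
      using Suc.IH i by auto
    have s: "s \<in> carrier_vec N" "s \<in> span_q i"
      using cs(1) span_q_carrier span_q_mono[of "i - 1" i] i by auto
    then have "(1 / l (i + 1) i) \<cdot>\<^sub>v (QU_col i - l i i \<cdot>\<^sub>v s) \<in> span_q i"
      using QU_col_in_span_q[of i i] i
      by (intro vec_subspaceD(4)[OF col_span_subspace] vec_subspace_diff[OF col_span_subspace]) auto
    then show ?thesis
      using q_Suc_decomp[OF i s(1) cs(2)] by auto
  qed
qed simp

definition orthonormal_upto :: "nat \<Rightarrow> bool" where
  "orthonormal_upto n \<longleftrightarrow> (\<forall>a\<in>{1..n}. \<forall>a'\<in>{1..n}. q a \<bullet>c q a' = (if a = a' then 1 else 0))"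

lemma QU_col_orth_span_q:
  assumes ON: "orthonormal_upto j" and j: "2 \<le> j" "j \<le> k" and s: "s \<in> span_q (j - 2)"
  shows "QU_col j \<bullet>c s = 0"
proof (rule cscalar_prod_span_q_eq_0[OF QU_col_carrier _ _ s])
  fix m assume m: "1 \<le> m" "m \<le> j - 2"
  have "q j \<bullet>c q m = 0" "q (j - 1) \<bullet>c q m = 0"
    using ON m j unfolding orthonormal_upto_def by auto
  then show "QU_col j \<bullet>c q m = 0"
    unfolding QU_col_def using q_carrier j m
    by (simp add: cscalar_prod_add_left[of _ N] cscalar_prod_smult_left[of _ N])
qed (use j in auto)

lemma q_prev_notin_V_span_q:
  assumes ON: "orthonormal_upto j" and j: "2 \<le> j" "j \<le> k" and s: "s \<in> span_q (j - 2)"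
  shows "q (j - 1) \<noteq> V *\<^sub>v s"
proof
  assume eq: "q (j - 1) = V *\<^sub>v s"
  have "v (j - 1) \<bullet>c q (j - 1) = (V *\<^sub>v q (j - 1)) \<bullet>c (V *\<^sub>v s)"
    using v_eq[of "j - 1"] eq j by simp
  also have "\<dots> = q (j - 1) \<bullet>c s"
    using isometry_cscalar_prod[OF V_carrier V_isometry] q_carrier span_q_carrier[OF s] j by simp
  also have "\<dots> = 0"
  proof (rule cscalar_prod_span_q_eq_0[OF q_carrier _ _ s])
    fix m assume "1 \<le> m" "m \<le> j - 2"
    then show "q (j - 1) \<bullet>c q m = 0"
      using ON j unfolding orthonormal_upto_def by auto
  qed (use j in auto)
  finally show False
    using arnoldi_step(2)[of j] j by simp
qed

lemma V_QU_col_cscalar_decomp: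
  assumes ON: "orthonormal_upto j" and j: "2 \<le> j" "j \<le> k" and s: "s \<in> span_q (j - 2)"
  shows "(V *\<^sub>v QU_col j) \<bullet>c (c \<cdot>\<^sub>v q 1 + V *\<^sub>v s) = cnj c * ((V *\<^sub>v QU_col j) \<bullet>c q 1)"
proof -
  have c: "QU_col j \<in> carrier_vec N" "s \<in> carrier_vec N" "q 1 \<in> carrier_vec N"
    using QU_col_carrier q_carrier span_q_carrier[OF s] j by auto
  have "(V *\<^sub>v QU_col j) \<bullet>c (V *\<^sub>v s) = QU_col j \<bullet>c s"
    using isometry_cscalar_prod[OF V_carrier V_isometry] c by simp
  also have "\<dots> = 0"
    by (rule QU_col_orth_span_q[OF ON j s])
  finally show ?thesis
    using c V_carrier by (simp add: cscalar_prod_add_right[of _ N] cscalar_prod_smult_right[of _ N])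
qed

lemma V_QU_col_orth:
  assumes ON: "orthonormal_upto j" and j: "2 \<le> j" "j \<le> k" and i: "1 \<le> i" "i < j"
  shows "(V *\<^sub>v QU_col j) \<bullet>c q i = 0"
proof -
  \<comment> \<open>all these inner products are multiples of the one with \<open>q 1\<close>, and the one with
    \<open>q (j - 1)\<close> is a nonzero multiple that vanishes by the choice of \<open>u (j - 1) j\<close>\<close>
  let ?y = "V *\<^sub>v QU_col j"
  have reduce: "?y \<bullet>c q i' = cnj c * (?y \<bullet>c q 1)"
    if "i' < j" "q i' = c \<cdot>\<^sub>v q 1 + V *\<^sub>v s" "s \<in> span_q (i' - 1)" for i' c s
  proof -
    have "i' - 1 \<le> j - 2" "j - 2 \<le> k + 1"
      using that(1) j by auto
    then have "s \<in> span_q (j - 2)"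
      using that(3) span_q_mono by blast
    then show ?thesis
      unfolding that(2) by (rule V_QU_col_cscalar_decomp[OF ON j])
  qed
  have "1 \<le> j - 1" "j - 1 \<le> k + 1"
    using j by auto
  then obtain c s where cs: "s \<in> span_q (j - 1 - 1)" "q (j - 1) = c \<cdot>\<^sub>v q 1 + V *\<^sub>v s"
    using q_decomp by blast
  have s: "s \<in> span_q (j - 2)"
    using cs(1) by (simp add: numeral_2_eq_2)
  have "c \<noteq> 0"
  proof
    assume "c = 0"
    then have "q (j - 1) = V *\<^sub>v s"
      using cs(2) q_carrier[of 1] V_carrier span_q_carrier[OF cs(1)] by (auto intro!: eq_vecI)
    then show False
      using q_prev_notin_V_span_q[OF ON j s] by simp
  qed
  moreover have "cnj c * (?y \<bullet>c q 1) = 0"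
    using reduce[OF _ cs(2,1)] V_QU_col_orth_prev[of j] j by simp
  ultimately have "?y \<bullet>c q 1 = 0"
    by simp
  moreover obtain c' s' where "q i = c' \<cdot>\<^sub>v q 1 + V *\<^sub>v s'" "s' \<in> span_q (i - 1)"
    using q_decomp[of i] i j by auto
  ultimately show ?thesis
    using reduce[of i c' s'] i by simp
qed

lemma orthonormal_upto_Suc:
  assumes j: "1 \<le> j" "j \<le> k" and ON: "orthonormal_upto j"
  shows "orthonormal_upto (j + 1)"
proof -
  have new: "q (j + 1) \<bullet>c q i = 0" if i: "1 \<le> i" "i \<le> j" for i
  proof -
    have "(V *\<^sub>v QU_col j) \<bullet>c q i = l j j * (q j \<bullet>c q i)"
    proof (cases "i = j")
      case True
      then show ?thesis
        using l_diag_eq[OF j] q_norm[of j] j by simp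
    next
      case False
      then have "q j \<bullet>c q i = 0"
        using ON i j unfolding orthonormal_upto_def by auto
      moreover have "(V *\<^sub>v QU_col j) \<bullet>c q i = 0"
        using V_QU_col_orth[OF ON _ j(2) i(1)] False i by simp
      ultimately show ?thesis
        by simp
    qed
    moreover have "q i \<in> carrier_vec N" "q j \<in> carrier_vec N" "QU_col j \<in> carrier_vec N"
      using q_carrier QU_col_carrier i j by auto
    ultimately show ?thesis
      unfolding arnoldi_next(3)[OF j] using V_carrier
      by (simp add: cscalar_prod_smult_left[of _ N] cscalar_prod_diff_left[of _ N])
  qed
  show ?thesis
    unfolding orthonormal_upto_def
  proof (intro ballI)
    fix a a' assume a: "a \<in> {1..j + 1}" and a': "a' \<in> {1..j + 1}"
    show "q a \<bullet>c q a' = (if a = a' then 1 else 0)"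
    proof (cases "a = j + 1"; cases "a' = j + 1")
      assume "a \<noteq> j + 1" "a' = j + 1"
      then show ?thesis
        using new[of a] a cscalar_prod_swap[of "q a" N "q (j + 1)"] q_carrier j by simp
    qed (use ON a a' new q_norm j in \<open>auto simp: orthonormal_upto_def\<close>)
  qed
qed

lemma orthonormal_upto_all: "n \<le> k + 1 \<Longrightarrow> orthonormal_upto n"
proof (induction n)
  case (Suc n)
  show ?case
  proof (cases "n = 0")
    case True
    then show ?thesis
      using q_norm[of 1] unfolding orthonormal_upto_def by auto
  next
    case False
    then show ?thesis
      using orthonormal_upto_Suc[of n] Suc by simp
  qed
qed (simp add: orthonormal_upto_def)

lemma cscalar_prod_q_q:
  assumes "a \<le> k + 1" "1 \<le> a'" "a' \<le> k + 1"
  shows "q a \<bullet>c q a' = (if a = a' then 1 else 0)"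
proof (cases "a = 0")
  case True
  then show ?thesis
    using arnoldi_init(1) q_carrier[of a'] assms by simp
next
  case False
  then show ?thesis
    using orthonormal_upto_all[of "k + 1"] assms unfolding orthonormal_upto_def by simp
qed

lemma V_q_in_span_q: "1 \<le> m \<Longrightarrow> m \<le> k \<Longrightarrow> V *\<^sub>v q m \<in> span_q (m + 1)"
proof (induction m)
  case (Suc m)
  have W: "vec_subspace N (span_q (Suc m + 1))"
    by (rule col_span_subspace)
  have VY: "V *\<^sub>v QU_col (Suc m) \<in> span_q (Suc m + 1)"
    unfolding arnoldi_relation[OF Suc.prems] using Suc.prems q_in_span_q
    by (intro vec_subspaceD(3,4)[OF W]) auto
  show ?case
  proof (cases "m = 0")
    case True
    then show ?thesis
      using VY QU_col_1 by simp
  next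
    case False
    have "V *\<^sub>v q m \<in> span_q (Suc m + 1)"
      using Suc False span_q_mono[of "m + 1" "Suc m + 1"] by auto
    then have "V *\<^sub>v QU_col (Suc m) - u m (Suc m) \<cdot>\<^sub>v (V *\<^sub>v q m) \<in> span_q (Suc m + 1)"
      by (intro vec_subspace_diff[OF W VY] vec_subspaceD(4)[OF W])
    moreover have "q m \<in> carrier_vec N" "q (Suc m) \<in> carrier_vec N"
      using q_carrier Suc.prems by auto
    then have "V *\<^sub>v q (Suc m) = V *\<^sub>v QU_col (Suc m) - u m (Suc m) \<cdot>\<^sub>v (V *\<^sub>v q m)"
      unfolding QU_col_def using V_carrier
      by (auto simp: mult_add_distrib_mat_vec[of _ N N] mult_mat_vec[of _ N N] intro!: eq_vecI)
    ultimately show ?thesis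
      by simp
  qed
qed simp

lemma Qmat_mult_Umat: "j \<le> k + 1 \<Longrightarrow> Qmat q N j * Umat u j = col_mat N (\<lambda>c. QU_col (c + 1)) j"
proof -
  assume j: "j \<le> k + 1"
  have "Qmat q N j * Umat u j = mat N j (\<lambda>(r, c). q (c + 1) $ r * Umat u j $$ (c, c)
      + (if c = 0 then 0 else q (c - 1 + 1) $ r * Umat u j $$ (c - 1, c)))"
    unfolding Qmat_col_mat by (rule col_mat_mult_upper_bidiagonal) (auto simp: Umat_index)
  also have "\<dots> = col_mat N (\<lambda>c. QU_col (c + 1)) j"
  proof (rule eq_matI)
    fix r c assume "r < dim_row (col_mat N (\<lambda>c. QU_col (c + 1)) j)" "c < dim_col (col_mat N (\<lambda>c. QU_col (c + 1)) j)"
    then have rc: "r < N" "c < j"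
      by auto
    have "q (c + 1) \<in> carrier_vec N" "q c \<in> carrier_vec N"
      using q_carrier rc j by auto
    then show "mat N j (\<lambda>(r, c). q (c + 1) $ r * Umat u j $$ (c, c)
        + (if c = 0 then 0 else q (c - 1 + 1) $ r * Umat u j $$ (c - 1, c))) $$ (r, c)
      = col_mat N (\<lambda>c. QU_col (c + 1)) j $$ (r, c)"
      using rc arnoldi_init(3) by (cases c) (auto simp: col_mat_def Umat_index QU_col_def)
  qed auto
  finally show ?thesis .
qed

lemma QU_mult_vec_in_span_q:
  assumes "z \<in> carrier_vec k"
  shows "(Qmat q N k * Umat u k) *\<^sub>v z \<in> span_q k"
proof -
  have "(Qmat q N k * Umat u k) *\<^sub>v z = Qmat q N k *\<^sub>v (Umat u k *\<^sub>v z)"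
    by (rule assoc_mult_mat_vec[OF Qmat_carrier Umat_carrier assms])
  then show ?thesis
    unfolding col_span_def Qmat_col_mat[symmetric]
    by (rule image_eqI[OF _ mult_mat_vec_carrier[OF Umat_carrier assms]])
qed

lemma span_q_QU:
  assumes "s \<in> span_q k"
  obtains z where "z \<in> carrier_vec k" "s = (Qmat q N k * Umat u k) *\<^sub>v z"
proof -
  obtain a where a: "a \<in> carrier_vec k" "s = Qmat q N k *\<^sub>v a"
    using assms unfolding col_span_def Qmat_col_mat by auto
  have U: "Umat u k \<in> carrier_mat k k" "det (Umat u k) \<noteq> 0"
    by (simp_all add: det_Umat)
  have "(Qmat q N k * Umat u k) *\<^sub>v (minv (Umat u k) *\<^sub>v a) = Qmat q N k *\<^sub>v (Umat u k *\<^sub>v (minv (Umat u k) *\<^sub>v a))"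
    by (rule assoc_mult_mat_vec[OF Qmat_carrier Umat_carrier]) (use a(1) minv_carrier[OF U] in simp)
  also have "Umat u k *\<^sub>v (minv (Umat u k) *\<^sub>v a) = (Umat u k * minv (Umat u k)) *\<^sub>v a"
    by (rule assoc_mult_mat_vec[symmetric, OF U(1) minv_carrier[OF U] a(1)])
  also have "\<dots> = a"
    using a mult_minv[OF U] by simp
  finally have "(Qmat q N k * Umat u k) *\<^sub>v (minv (Umat u k) *\<^sub>v a) = s"
    unfolding a(2) .
  then show ?thesis
    by (intro that[of "minv (Umat u k) *\<^sub>v a"]) (use minv_carrier[OF U] a(1) in auto)
qed

end

section \<open>Krylov spaces and the Galerkin condition\<close>

locale shifted_unitary_arnoldi = unitary_arnoldi_run +
  fixes D :: "complex mat" and c1 c2 :: real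
  assumes D_def: "D = complex_of_real c1 \<cdot>\<^sub>m 1\<^sub>m N + complex_of_real c2 \<cdot>\<^sub>m V"
begin

lemma D_carrier: "D \<in> carrier_mat N N"
  using D_def V_carrier by simp

lemma D_dim [simp]: "dim_row D = N" "dim_col D = N"
  using D_carrier by auto

lemma D_mult_vec:
  assumes "x \<in> carrier_vec N"
  shows "D *\<^sub>v x = complex_of_real c1 \<cdot>\<^sub>v x + complex_of_real c2 \<cdot>\<^sub>v (V *\<^sub>v x)"
  unfolding D_def using assms V_carrier
  by (simp add: add_mult_distrib_mat_vec[of _ N N] smult_mat_mult_vec[of _ N N])

lemma krylov_eq: "krylov D b j = col_span N (\<lambda>c. (D ^\<^sub>m c) *\<^sub>v b) j"
  unfolding krylov_def col_span_def col_mat_def Setcompr_eq_image using b_carrier by simp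

lemma krylov_vec_carrier: "(D ^\<^sub>m c) *\<^sub>v b \<in> carrier_vec N"
  by (rule mult_mat_vec_carrier[OF pow_carrier_mat[OF D_carrier] b_carrier])

lemma krylov_vec_0: "(D ^\<^sub>m 0) *\<^sub>v b = b"
  using D_carrier b_carrier by simp

lemma krylov_vec_Suc: "(D ^\<^sub>m Suc c) *\<^sub>v b = D *\<^sub>v ((D ^\<^sub>m c) *\<^sub>v b)"
  by (simp only: pow_mat_Suc_left[OF D_carrier]
      assoc_mult_mat_vec[OF D_carrier pow_carrier_mat[OF D_carrier] b_carrier])

lemma krylov_subspace: "vec_subspace N (krylov D b j)"
  unfolding krylov_eq by (rule col_span_subspace)

lemma b_in_krylov: "1 \<le> j \<Longrightarrow> b \<in> krylov D b j"
  unfolding krylov_eq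
  using col_in_col_span[where f = "\<lambda>c. (D ^\<^sub>m c) *\<^sub>v b", OF _ krylov_vec_carrier, of 0 j]
  by (simp only: krylov_vec_0)

lemma D_krylov:
  assumes "s \<in> krylov D b j"
  shows "D *\<^sub>v s \<in> krylov D b (Suc j)"
  unfolding krylov_eq
proof (rule mat_mult_vec_col_span[OF D_carrier krylov_vec_carrier col_span_subspace])
  fix c assume "c < j"
  then have "Suc c < Suc j"
    by simp
  from col_in_col_span[where f = "\<lambda>c. (D ^\<^sub>m c) *\<^sub>v b", OF this krylov_vec_carrier]
  show "D *\<^sub>v ((D ^\<^sub>m c) *\<^sub>v b) \<in> col_span N (\<lambda>c. (D ^\<^sub>m c) *\<^sub>v b) (Suc j)"
    by (simp only: krylov_vec_Suc)
qed (use assms krylov_eq in simp)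

lemma krylov_mono: "j \<le> j' \<Longrightarrow> krylov D b j \<subseteq> krylov D b j'"
  unfolding krylov_eq by (rule col_span_mono) (auto intro: krylov_vec_carrier)

lemma D_span_q:
  assumes "j \<le> k" "s \<in> span_q j"
  shows "D *\<^sub>v s \<in> span_q (Suc j)"
proof (rule mat_mult_vec_col_span[OF D_carrier _ col_span_subspace _ assms(2)])
  fix c assume c: "c < j"
  then have "q (c + 1) \<in> carrier_vec N" "q (c + 1) \<in> span_q (Suc j)" "V *\<^sub>v q (c + 1) \<in> span_q (Suc j)"
    using assms q_carrier q_in_span_q V_q_in_span_q[of "c + 1"] span_q_mono[of "c + 2" "Suc j"] by auto
  then show "D *\<^sub>v q (c + 1) \<in> span_q (Suc j)"
    unfolding D_mult_vec[OF \<open>q (c + 1) \<in> carrier_vec N\<close>]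
    by (intro vec_subspaceD(3,4)[OF col_span_subspace])
qed (use assms q_carrier in auto)

lemma krylov_subset_span_q: "krylov D b k \<subseteq> span_q k"
proof -
  have "(D ^\<^sub>m c) *\<^sub>v b \<in> span_q (c + 1)" if "c < k" for c
    using that
  proof (induction c)
    case 0
    have "q 1 \<in> span_q 1"
      using q_in_span_q[of 1 1] by simp
    then have "b \<in> span_q 1"
      by (subst b_eq) (rule vec_subspaceD(4)[OF col_span_subspace])
    then show ?case
      by (simp only: krylov_vec_0) simp
  next
    case (Suc c)
    then show ?case
      using D_span_q[of "c + 1"] by (simp only: krylov_vec_Suc) simp
  qed
  then have "(D ^\<^sub>m c) *\<^sub>v b \<in> span_q k" if "c < k" for c
    using that span_q_mono[of "c + 1" k] by auto
  then show ?thesis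
    unfolding krylov_eq by (intro col_span_subset[OF col_span_subspace])
qed

lemma V_krylov:
  assumes c2: "c2 \<noteq> 0" and y: "y \<in> krylov D b j"
  shows "V *\<^sub>v y \<in> krylov D b (Suc j)"
proof -
  note W = krylov_subspace[of "Suc j"]
  have y_carrier: "y \<in> carrier_vec N"
    using y vec_subspaceD(1)[OF krylov_subspace] by blast
  have V_y: "V *\<^sub>v y = (1 / complex_of_real c2) \<cdot>\<^sub>v (D *\<^sub>v y - complex_of_real c1 \<cdot>\<^sub>v y)"
    using D_mult_vec[OF y_carrier] y_carrier V_carrier c2 by (auto simp: field_simps intro!: eq_vecI)
  have "D *\<^sub>v y \<in> krylov D b (Suc j)" "y \<in> krylov D b (Suc j)"
    using D_krylov[OF y] y krylov_mono[of j "Suc j"] by auto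
  then show ?thesis
    unfolding V_y by (intro vec_subspaceD(4)[OF W] vec_subspace_diff[OF W])
qed

lemma q_in_krylov:
  assumes "c2 \<noteq> 0"
  shows "1 \<le> m \<Longrightarrow> m \<le> k \<Longrightarrow> q m \<in> krylov D b m"
proof (induction m rule: less_induct)
  case (less m)
  note W = krylov_subspace[of m]
  show ?case
  proof (cases "m = 1")
    case True
    then show ?thesis
      using arnoldi_init(4) b_in_krylov[of 1] vec_subspaceD(4)[OF W] by simp
  next
    case False
    define i where "i = m - 1"
    have i: "m = Suc i" "1 \<le> i" "i \<le> k"
      using less.prems False unfolding i_def by auto
    have "q i \<in> krylov D b i"
      using less i by simp
    moreover have "q (i - 1) \<in> krylov D b i"
    proof (cases "i = 1")
      case True
      then show ?thesis
        using arnoldi_init(1) vec_subspaceD(2)[OF krylov_subspace] by simp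
    next
      case False
      then show ?thesis
        using less.IH[of "i - 1"] i krylov_mono[of "i - 1" i] by auto
    qed
    ultimately have "QU_col i \<in> krylov D b i"
      unfolding QU_col_def by (intro vec_subspaceD(3,4)[OF krylov_subspace])
    then have "V *\<^sub>v QU_col i - l i i \<cdot>\<^sub>v q i \<in> krylov D b m"
      using V_krylov[OF assms] \<open>q i \<in> krylov D b i\<close> krylov_mono[of i m] i
      by (intro vec_subspace_diff[OF W] vec_subspaceD(4)[OF W]) auto
    then show ?thesis
      using arnoldi_next(3)[OF i(2,3)] i(1) vec_subspaceD(4)[OF W] by simp
  qed
qed

lemma span_q_subset_krylov:
  assumes "c2 \<noteq> 0"
  shows "span_q k \<subseteq> krylov D b k"
proof (rule col_span_subset[OF krylov_subspace])
  fix c assume "c < k"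
  then show "q (c + 1) \<in> krylov D b k"
    using q_in_krylov[OF assms, of "c + 1"] krylov_mono[of "c + 1" k] by auto
qed

lemma D_QU_col_cscalar_q:
  assumes c: "c < k" and m: "1 \<le> m" "m \<le> k"
  shows "(D *\<^sub>v QU_col (c + 1)) \<bullet>c q m = Tmat c1 c2 u l k $$ (m - 1, c)"
proof -
  have q: "q c \<in> carrier_vec N" "q (c + 1) \<in> carrier_vec N" "q (c + 2) \<in> carrier_vec N"
    using q_carrier c by auto
  have QU: "QU_col (c + 1) \<in> carrier_vec N"
    using QU_col_carrier c by simp
  have rel: "V *\<^sub>v QU_col (c + 1) = l (c + 1) (c + 1) \<cdot>\<^sub>v q (c + 1) + l (c + 2) (c + 1) \<cdot>\<^sub>v q (c + 2)"
    using arnoldi_relation[of "c + 1"] c by simp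
  have "D *\<^sub>v QU_col (c + 1) = complex_of_real c1 \<cdot>\<^sub>v QU_col (c + 1) + complex_of_real c2 \<cdot>\<^sub>v (V *\<^sub>v QU_col (c + 1))"
    by (rule D_mult_vec[OF QU])
  also have "\<dots> = (complex_of_real c1 + complex_of_real c2 * l (c + 1) (c + 1)) \<cdot>\<^sub>v q (c + 1)
      + (complex_of_real c1 * u c (c + 1)) \<cdot>\<^sub>v q c + (complex_of_real c2 * l (c + 2) (c + 1)) \<cdot>\<^sub>v q (c + 2)"
    unfolding rel using q by (auto simp: QU_col_def algebra_simps intro!: eq_vecI)
  finally have "(D *\<^sub>v QU_col (c + 1)) \<bullet>c q m
      = (complex_of_real c1 + complex_of_real c2 * l (c + 1) (c + 1)) * (q (c + 1) \<bullet>c q m)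
        + (complex_of_real c1 * u c (c + 1)) * (q c \<bullet>c q m)
        + (complex_of_real c2 * l (c + 2) (c + 1)) * (q (c + 2) \<bullet>c q m)"
    using q q_carrier[of m] m
    by (simp add: cscalar_prod_add_left[of _ N] cscalar_prod_smult_left[of _ N])
  also have "\<dots> = Tmat c1 c2 u l k $$ (m - 1, c)"
    using cscalar_prod_q_q c m by (auto simp: Tmat_index)
  finally show ?thesis .
qed

lemma D_QU_cscalar_q:
  assumes z: "z \<in> carrier_vec k" and m: "1 \<le> m" "m \<le> k"
  shows "(D *\<^sub>v ((Qmat q N k * Umat u k) *\<^sub>v z)) \<bullet>c q m = (Tmat c1 c2 u l k *\<^sub>v z) $ (m - 1)"
proof -
  have QU: "\<forall>c<k. QU_col (c + 1) \<in> carrier_vec N"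
    using QU_col_carrier by auto
  have "D *\<^sub>v ((Qmat q N k * Umat u k) *\<^sub>v z) = (D * col_mat N (\<lambda>c. QU_col (c + 1)) k) *\<^sub>v z"
    using Qmat_mult_Umat[of k] assoc_mult_mat_vec[OF D_carrier col_mat_carrier z] by simp
  also have "\<dots> = col_mat N (\<lambda>c. D *\<^sub>v QU_col (c + 1)) k *\<^sub>v z"
    using mat_mult_col_mat[OF D_carrier QU] by simp
  finally have "(D *\<^sub>v ((Qmat q N k * Umat u k) *\<^sub>v z)) \<bullet>c q m
      = (\<Sum>c<k. z $ c * ((D *\<^sub>v QU_col (c + 1)) \<bullet>c q m))"
    using col_mat_mult_vec_cscalar_prod[OF z q_carrier] m by simp
  also have "\<dots> = (\<Sum>c<k. Tmat c1 c2 u l k $$ (m - 1, c) * z $ c)"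
    using D_QU_col_cscalar_q m by (intro sum.cong) auto
  also have "\<dots> = (Tmat c1 c2 u l k *\<^sub>v z) $ (m - 1)"
    using z m by (simp add: scalar_prod_def lessThan_atLeast0)
  finally show ?thesis .
qed

lemma residual_cscalar_q:
  assumes z: "z \<in> carrier_vec k" and m: "1 \<le> m" "m \<le> k"
  shows "(b - D *\<^sub>v ((Qmat q N k * Umat u k) *\<^sub>v z)) \<bullet>c q m
    = complex_of_real (vnorm b) * (if m = 1 then 1 else 0) - (Tmat c1 c2 u l k *\<^sub>v z) $ (m - 1)"
proof -
  have "b \<bullet>c q m = complex_of_real (vnorm b) * (q 1 \<bullet>c q m)"
    using q_carrier[of 1] q_carrier[of m] m by (subst b_eq) (simp add: cscalar_prod_smult_left[of _ N])
  also have "q 1 \<bullet>c q m = (if m = 1 then 1 else 0)"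
    using cscalar_prod_q_q[of 1 m] m by auto
  moreover have "D *\<^sub>v ((Qmat q N k * Umat u k) *\<^sub>v z) \<in> carrier_vec N" "q m \<in> carrier_vec N"
    using q_carrier m by (auto intro: carrier_vecI)
  ultimately show ?thesis
    using D_QU_cscalar_q[OF assms] b_carrier by (simp add: cscalar_prod_diff_left[of _ N])
qed

lemma galerkin_residual_orth:
  assumes z: "z \<in> carrier_vec k" "Tmat c1 c2 u l k *\<^sub>v z = complex_of_real (vnorm b) \<cdot>\<^sub>v unit_vec k 0"
    and y: "y \<in> krylov D b k"
  shows "(b - D *\<^sub>v ((Qmat q N k * Umat u k) *\<^sub>v z)) \<bullet>c y = 0"
proof (rule cscalar_prod_span_q_eq_0)
  show "y \<in> span_q k"
    using y krylov_subset_span_q by auto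
  fix m assume "1 \<le> m" "m \<le> k"
  then show "(b - D *\<^sub>v ((Qmat q N k * Umat u k) *\<^sub>v z)) \<bullet>c q m = 0"
    using residual_cscalar_q[OF z(1)] z(2) by simp
qed (auto intro: carrier_vecI simp: b_carrier)

lemma galerkin_solution_in_krylov:
  assumes k: "1 \<le> k"
    and z: "z \<in> carrier_vec k" "Tmat c1 c2 u l k *\<^sub>v z = complex_of_real (vnorm b) \<cdot>\<^sub>v unit_vec k 0"
  shows "(Qmat q N k * Umat u k) *\<^sub>v z \<in> krylov D b k"
proof (cases "c2 = 0")
  case False
  then show ?thesis
    using QU_mult_vec_in_span_q[OF z(1)] span_q_subset_krylov by auto
next
  case True
  \<comment> \<open>the Krylov space is only \<open>span {b}\<close> now, but \<open>D = c1 I\<close> and the residual vanishes\<close>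
  let ?x = "(Qmat q N k * Umat u k) *\<^sub>v z"
  let ?r = "b - D *\<^sub>v ?x"
  have x: "?x \<in> span_q k" "?x \<in> carrier_vec N"
    using QU_mult_vec_in_span_q[OF z(1)] span_q_carrier by auto
  have Dx: "D *\<^sub>v ?x = complex_of_real c1 \<cdot>\<^sub>v ?x"
    using D_mult_vec[OF x(2)] True x(2) V_carrier by (auto intro!: eq_vecI)
  have "q 1 \<in> span_q k"
    using q_in_span_q[of 1 k] k by simp
  then have "b \<in> span_q k"
    by (subst b_eq) (rule vec_subspaceD(4)[OF col_span_subspace])
  then have r: "?r \<in> span_q k" "?r \<in> carrier_vec N"
    unfolding Dx using x b_carrier
    by (auto intro: vec_subspace_diff[OF col_span_subspace] vec_subspaceD(4)[OF col_span_subspace])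
  have "?r \<bullet>c ?r = 0"
  proof (rule cscalar_prod_span_q_eq_0[OF r(2) _ _ r(1)])
    fix m assume "1 \<le> m" "m \<le> k"
    then show "?r \<bullet>c q m = 0"
      using residual_cscalar_q[OF z(1)] z(2) by simp
  qed simp
  then have "?r = 0\<^sub>v N"
    by (rule conjugate_square_eq_0_vec[OF r(2), THEN iffD1])
  then have "complex_of_real c1 \<cdot>\<^sub>v ?x = b"
    using diff_eq_0_vec_iff[of b N "D *\<^sub>v ?x"] b_carrier Dx by (simp add: carrier_vecI)
  then have "c1 \<noteq> 0" "?x = (1 / complex_of_real c1) \<cdot>\<^sub>v b"
    using b_nonzero x(2) b_carrier by (auto intro!: eq_vecI)
  then show ?thesis
    using b_in_krylov[OF k] by (simp add: vec_subspaceD(4)[OF krylov_subspace])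
qed

lemma D_orth_krylov_imp_zero:
  assumes det: "det (Tmat c1 c2 u l k) \<noteq> 0" and c1: "c2 = 0 \<Longrightarrow> c1 \<noteq> 0"
    and d: "d \<in> krylov D b k" and Dd: "\<And>y. y \<in> krylov D b k \<Longrightarrow> (D *\<^sub>v d) \<bullet>c y = 0"
  shows "d = 0\<^sub>v N"
proof (cases "c2 = 0")
  case True
  have d_carrier: "d \<in> carrier_vec N"
    using d vec_subspaceD(1)[OF krylov_subspace] by blast
  then have "D *\<^sub>v d = complex_of_real c1 \<cdot>\<^sub>v d"
    using D_mult_vec True V_carrier by (auto intro!: eq_vecI)
  then show ?thesis
    using Dd[OF d] c1[OF True] d_carrier by simp
next
  case False
  obtain z where z: "z \<in> carrier_vec k" "d = (Qmat q N k * Umat u k) *\<^sub>v z"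
    using span_q_QU d krylov_subset_span_q by blast
  have "Tmat c1 c2 u l k *\<^sub>v z = 0\<^sub>v k"
  proof (rule eq_vecI)
    fix r assume "r < dim_vec (0\<^sub>v k :: complex vec)"
    then have r: "1 \<le> r + 1" "r + 1 \<le> k"
      by auto
    then have "q (r + 1) \<in> krylov D b k"
      using q_in_span_q span_q_subset_krylov[OF False] by auto
    then show "(Tmat c1 c2 u l k *\<^sub>v z) $ r = 0\<^sub>v k $ r"
      using Dd D_QU_cscalar_q[OF z(1) r] z(2) r by simp
  qed simp
  then have "z = 0\<^sub>v k"
    using minv_mult_vec_eq[OF Tmat_carrier det z(1)] minv_carrier[OF Tmat_carrier det]
    by (auto intro!: eq_vecI)
  then show ?thesis
    using z(2) mult_mat_vec_zero[OF mult_carrier_mat[OF Qmat_carrier Umat_carrier]] by simp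
qed

lemma galerkin_unique:
  assumes k: "1 \<le> k" and det: "det (Tmat c1 c2 u l k) \<noteq> 0"
    and x': "x' \<in> krylov D b k" "\<forall>y\<in>krylov D b k. (b - D *\<^sub>v x') \<bullet>c y = 0"
    and x'': "x'' \<in> krylov D b k" "\<forall>y\<in>krylov D b k. (b - D *\<^sub>v x'') \<bullet>c y = 0"
  shows "x' = x''"
proof -
  note K = krylov_subspace[of k]
  have c: "x' \<in> carrier_vec N" "x'' \<in> carrier_vec N"
    using x' x'' vec_subspaceD(1)[OF K] by auto
  have r: "b - D *\<^sub>v x' \<in> carrier_vec N" "b - D *\<^sub>v x'' \<in> carrier_vec N"
    using b_carrier by (auto intro: carrier_vecI)
  have "D *\<^sub>v (x' - x'') = (b - D *\<^sub>v x'') - (b - D *\<^sub>v x')"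
    using c b_carrier D_carrier by (auto simp: mult_minus_distrib_mat_vec[of _ N N] intro!: eq_vecI)
  then have "(D *\<^sub>v (x' - x'')) \<bullet>c y = 0" if "y \<in> krylov D b k" for y
    using that x'(2) x''(2) r vec_subspaceD(1)[OF K] by (auto simp: cscalar_prod_diff_left[of _ N])
  moreover have "c1 \<noteq> 0" if "c2 = 0"
  proof
    assume "c1 = 0"
    \<comment> \<open>then \<open>D = 0\<close>, and the residual \<open>b\<close> of \<open>x'\<close> would be orthogonal to \<open>b \<in> krylov D b k\<close>\<close>
    then have "b - D *\<^sub>v x' = b"
      using D_mult_vec[OF c(1)] that c(1) V_carrier b_carrier by (auto intro!: eq_vecI)
    then show False
      using x'(2) b_in_krylov[OF k] b_nonzero b_carrier by auto
  qed
  ultimately have "x' - x'' = 0\<^sub>v N"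
    using D_orth_krylov_imp_zero[OF det] vec_subspace_diff[OF K x'(1) x''(1)] by blast
  then show ?thesis
    using diff_eq_0_vec_iff[OF c] by simp
qed

end

section \<open>The LU-based short recurrences\<close>

locale unitary_arnoldi_LU_solver =
  shifted_unitary_arnoldi V N k b q v u l D c1 c2 + tridiagonal_LU k "Tmat c1 c2 u l k" Lt Ut
  for V N k b q v u l D c1 c2 Lt Ut +
  fixes w x :: "nat \<Rightarrow> complex vec" and alpha beta gamma :: "nat \<Rightarrow> complex"
  assumes k_pos: "1 \<le> k"
    and beta_def: "\<And>j. beta j = - complex_of_real c2 * l (j + 1) j"
    and gamma_def: "\<And>j. gamma j = - complex_of_real c1 * u j (j + 1)"
    and alpha_1: "alpha 1 = complex_of_real (vnorm b) / Lt $$ (0, 0)"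
    and alpha_rec: "\<forall>j\<in>{2..k}. alpha j = beta (j - 1) * alpha (j - 1) / Lt $$ (j - 1, j - 1)"
    and w_1: "w 1 = q 1"
    and w_rec: "\<forall>j\<in>{2..k}. w j = q j + u (j - 1) j \<cdot>\<^sub>v q (j - 1)
                               + (gamma (j - 1) / Lt $$ (j - 2, j - 2)) \<cdot>\<^sub>v w (j - 1)"
    and x_0: "x 0 = 0\<^sub>v N"
    and x_rec: "\<forall>j\<in>{1..k}. x j = x (j - 1) + alpha j \<cdot>\<^sub>v w j"
begin

lemma Tmat_off_diag:
  assumes "1 \<le> i" "i < k"
  shows Tmat_sub_diag: "Tmat c1 c2 u l k $$ (i, i - 1) = - beta i"
    and Tmat_super_diag: "Tmat c1 c2 u l k $$ (i - 1, i) = - gamma i"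
proof -
  have "i - 1 < k" "i \<noteq> i - 1" "i - 1 \<noteq> i + 1" "i - 1 + 1 = i"
    using assms by auto
  then show "Tmat c1 c2 u l k $$ (i, i - 1) = - beta i" "Tmat c1 c2 u l k $$ (i - 1, i) = - gamma i"
    using assms by (simp_all add: Tmat_index beta_def gamma_def)
qed

lemma pivot_first: "Lt $$ (0, 0) = complex_of_real c1 + complex_of_real c2 * l 1 1"
  using L_diag_first k_pos by (simp add: Tmat_index)

lemma pivot_recurrence:
  assumes "j \<in> {2..k}"
  shows "Lt $$ (j - 1, j - 1) = complex_of_real c1 + complex_of_real c2 * l j j
    - beta (j - 1) * gamma (j - 1) / Lt $$ (j - 2, j - 2)"
proof -
  have i: "1 \<le> j - 1" "j - 1 < k" "j - 1 - 1 = j - 2" "j - 1 + 1 = j"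
    using assms by auto
  show ?thesis
    using L_diag_recurrence[OF i(1,2)] Tmat_sub_diag[OF i(1,2)] Tmat_super_diag[OF i(1,2)] i
    by (simp add: Tmat_index)
qed

lemma Ut_super_diag: "1 \<le> i \<Longrightarrow> i < k \<Longrightarrow> Ut $$ (i - 1, i) = - gamma i / Lt $$ (i - 1, i - 1)"
  using U_super_diag Tmat_super_diag by simp

lemma w_carrier: "1 \<le> j \<Longrightarrow> j \<le> k \<Longrightarrow> w j \<in> carrier_vec N"
proof (induction j rule: less_induct)
  case (less j)
  show ?case
  proof (cases "j = 1")
    case True
    then show ?thesis
      using w_1 q_carrier[of 1] by simp
  next
    case False
    then have "j \<in> {2..k}" "w (j - 1) \<in> carrier_vec N" "q j \<in> carrier_vec N" "q (j - 1) \<in> carrier_vec N"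
      using less q_carrier by auto
    then show ?thesis
      using w_rec by simp
  qed
qed

abbreviation Wmat :: "nat \<Rightarrow> complex mat" where
  "Wmat j \<equiv> col_mat N (\<lambda>c. w (c + 1)) j"

lemma Wmat_mult_Ut: "j \<le> k \<Longrightarrow> Wmat j * lead_sub Ut j = Qmat q N j * Umat u j"
proof -
  assume j: "j \<le> k"
  have "Wmat j * lead_sub Ut j = mat N j (\<lambda>(r, c). w (c + 1) $ r * lead_sub Ut j $$ (c, c)
      + (if c = 0 then 0 else w (c - 1 + 1) $ r * lead_sub Ut j $$ (c - 1, c)))"
    by (rule col_mat_mult_upper_bidiagonal) (use lead_sub_U_bidiagonal j in auto)
  also have "\<dots> = col_mat N (\<lambda>c. QU_col (c + 1)) j"
  proof (rule eq_matI)
    fix r c assume "r < dim_row (col_mat N (\<lambda>c. QU_col (c + 1)) j)" "c < dim_col (col_mat N (\<lambda>c. QU_col (c + 1)) j)"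
    then have rc: "r < N" "c < j"
      by auto
    show "mat N j (\<lambda>(r, c). w (c + 1) $ r * lead_sub Ut j $$ (c, c)
        + (if c = 0 then 0 else w (c - 1 + 1) $ r * lead_sub Ut j $$ (c - 1, c))) $$ (r, c)
      = col_mat N (\<lambda>c. QU_col (c + 1)) j $$ (r, c)"
    proof (cases "c = 0")
      case True
      then show ?thesis
        using rc U_diag[of 0] j w_1 QU_col_1 by (simp add: col_mat_def)
    next
      case False
      then have c: "1 \<le> c" "c < k" "c + 1 \<in> {2..k}"
        using rc j by auto
      have "w (c + 1) = QU_col (c + 1) + (gamma c / Lt $$ (c - 1, c - 1)) \<cdot>\<^sub>v w c"
        using w_rec c(3) by (simp add: QU_col_def numeral_2_eq_2)
      then show ?thesis
        using rc c U_diag[of c] Ut_super_diag[OF c(1,2)] w_carrier[of c] QU_col_carrier[of "c + 1"]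
        by (simp add: col_mat_def)
    qed
  qed auto
  finally show ?thesis
    using Qmat_mult_Umat j by simp
qed

lemma Wmat_eq: "j \<le> k \<Longrightarrow> Wmat j = Qmat q N j * Umat u j * minv (lead_sub Ut j)"
proof -
  assume j: "j \<le> k"
  have U: "lead_sub Ut j \<in> carrier_mat j j" "det (lead_sub Ut j) \<noteq> 0"
    using det_lead_sub_U[OF j] by simp_all
  have "Wmat j = Wmat j * (lead_sub Ut j * minv (lead_sub Ut j))"
    using mult_minv[OF U] by simp
  also have "\<dots> = Wmat j * lead_sub Ut j * minv (lead_sub Ut j)"
    using minv_carrier[OF U] by (simp add: assoc_mult_mat[of _ N j _ j _ j])
  finally show ?thesis
    using Wmat_mult_Ut[OF j] by simp
qed

lemma w_eq: "j \<in> {1..k} \<Longrightarrow> w j = (Qmat q N j * Umat u j * minv (lead_sub Ut j)) *\<^sub>v unit_vec j (j - 1)"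
  using Wmat_eq[of j] col_mat_mult_unit_vec[of "j - 1" j "\<lambda>c. w (c + 1)" N] w_carrier[of j] by simp

definition alpha_vec :: "nat \<Rightarrow> complex vec" where
  "alpha_vec j = vec j (\<lambda>i. alpha (i + 1))"

lemma Lt_mult_alpha_vec:
  assumes j: "j \<le> k"
  shows "lead_sub Lt j *\<^sub>v alpha_vec j = complex_of_real (vnorm b) \<cdot>\<^sub>v unit_vec j 0"
proof (rule eq_vecI)
  fix r assume "r < dim_vec (complex_of_real (vnorm b) \<cdot>\<^sub>v unit_vec j 0)"
  then have r: "r < j"
    by simp
  have "alpha_vec j \<in> carrier_vec j" "alpha_vec j $ r = alpha (r + 1)"
    "r \<noteq> 0 \<Longrightarrow> alpha_vec j $ (r - 1) = alpha r"
    using r by (auto simp: alpha_vec_def)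
  then have "(lead_sub Lt j *\<^sub>v alpha_vec j) $ r
      = Lt $$ (r, r) * alpha (r + 1) + (if r = 0 then 0 else Lt $$ (r, r - 1) * alpha r)"
    using lead_sub_L_mult_vec[OF j r] by simp
  also have "\<dots> = (complex_of_real (vnorm b) \<cdot>\<^sub>v unit_vec j 0) $ r"
  proof (cases "r = 0")
    case True
    then show ?thesis
      using alpha_1 L_diag[of 0] r j by simp
  next
    case False
    then have i: "1 \<le> r" "r < k" "r + 1 \<in> {2..k}"
      using r j by auto
    then show ?thesis
      using alpha_rec L_diag[of r] L_sub_diag[OF i(1,2)] Tmat_sub_diag[OF i(1,2)] r False by simp
  qed
  finally show "(lead_sub Lt j *\<^sub>v alpha_vec j) $ r = (complex_of_real (vnorm b) \<cdot>\<^sub>v unit_vec j 0) $ r" .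
qed (simp add: alpha_vec_def)

lemma det_Tmat: "j \<le> k \<Longrightarrow> det (Tmat c1 c2 u l j) \<noteq> 0"
  using det_lead_sub_T lead_sub_Tmat by metis

lemma Tmat_mult_coeffs:
  assumes j: "j \<le> k"
  shows "Tmat c1 c2 u l j *\<^sub>v (minv (lead_sub Ut j) *\<^sub>v alpha_vec j) = complex_of_real (vnorm b) \<cdot>\<^sub>v unit_vec j 0"
proof -
  have U: "lead_sub Ut j \<in> carrier_mat j j" "det (lead_sub Ut j) \<noteq> 0"
    using det_lead_sub_U[OF j] by simp_all
  have a: "alpha_vec j \<in> carrier_vec j"
    by (simp add: alpha_vec_def)
  have "Tmat c1 c2 u l j = lead_sub Lt j * lead_sub Ut j"
    using lead_sub_LU[OF j] lead_sub_Tmat[OF j, of c1 c2 u l] by simp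
  then have "Tmat c1 c2 u l j *\<^sub>v (minv (lead_sub Ut j) *\<^sub>v alpha_vec j)
      = lead_sub Lt j *\<^sub>v (lead_sub Ut j *\<^sub>v (minv (lead_sub Ut j) *\<^sub>v alpha_vec j))"
    using assoc_mult_mat_vec[OF lead_sub_carrier lead_sub_carrier] minv_carrier[OF U] a by simp
  also have "lead_sub Ut j *\<^sub>v (minv (lead_sub Ut j) *\<^sub>v alpha_vec j) = alpha_vec j"
    using assoc_mult_mat_vec[OF U(1) minv_carrier[OF U] a] mult_minv[OF U] a by simp
  finally show ?thesis
    using Lt_mult_alpha_vec[OF j] by simp
qed

lemma alpha_eq:
  assumes "j \<in> {1..k}"
  shows "alpha j = complex_of_real (vnorm b) * minv (Tmat c1 c2 u l j) $$ (j - 1, 0)"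
proof -
  have j: "1 \<le> j" "j \<le> k"
    using assms by auto
  have U: "lead_sub Ut j \<in> carrier_mat j j" "det (lead_sub Ut j) \<noteq> 0"
    using det_lead_sub_U[OF j(2)] by simp_all
  define z where "z = minv (lead_sub Ut j) *\<^sub>v alpha_vec j"
  have z: "z \<in> carrier_vec j"
    unfolding z_def using minv_carrier[OF U] by (simp add: alpha_vec_def)
  have "minv (Tmat c1 c2 u l j) *\<^sub>v (complex_of_real (vnorm b) \<cdot>\<^sub>v unit_vec j 0) = z"
    using minv_mult_vec_eq[OF Tmat_carrier det_Tmat[OF j(2)] z] Tmat_mult_coeffs[OF j(2)] unfolding z_def by simp
  then have "complex_of_real (vnorm b) * minv (Tmat c1 c2 u l j) $$ (j - 1, 0) = z $ (j - 1)"
    using mat_mult_smult_unit_vec_0_index[OF minv_carrier[OF Tmat_carrier det_Tmat[OF j(2)]],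
        of "j - 1" "complex_of_real (vnorm b)"] j by simp
  also have "z $ (j - 1) = (lead_sub Ut j *\<^sub>v z) $ (j - 1)"
    using lead_sub_U_mult_vec_last[OF j z] by simp
  also have "lead_sub Ut j *\<^sub>v z = alpha_vec j"
    unfolding z_def using assoc_mult_mat_vec[OF U(1) minv_carrier[OF U]] mult_minv[OF U]
    by (simp add: alpha_vec_def)
  finally show ?thesis
    using j by (simp add: alpha_vec_def)
qed

lemma x_eq_Wmat: "j \<le> k \<Longrightarrow> x j = Wmat j *\<^sub>v alpha_vec j"
proof (induction j)
  case 0
  then show ?case
    using x_0 by (auto simp: col_mat_mult_vec alpha_vec_def intro!: eq_vecI)
next
  case (Suc j)
  have "vec j (\<lambda>i. alpha_vec (Suc j) $ i) = alpha_vec j"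
    by (auto simp: alpha_vec_def intro!: eq_vecI)
  then have "Wmat (Suc j) *\<^sub>v alpha_vec (Suc j) = Wmat j *\<^sub>v alpha_vec j + alpha (Suc j) \<cdot>\<^sub>v w (Suc j)"
    using col_mat_mult_vec_Suc[where f = "\<lambda>c. w (c + 1)", of "alpha_vec (Suc j)" j N] w_carrier[of "Suc j"] Suc.prems
    by (simp add: alpha_vec_def)
  then show ?case
    using x_rec Suc by simp
qed

lemma x_k_QU_solution:
  obtains z where "z \<in> carrier_vec k"
    "Tmat c1 c2 u l k *\<^sub>v z = complex_of_real (vnorm b) \<cdot>\<^sub>v unit_vec k 0"
    "x k = (Qmat q N k * Umat u k) *\<^sub>v z"
proof -
  have U: "lead_sub Ut k \<in> carrier_mat k k" "det (lead_sub Ut k) \<noteq> 0"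
    using det_lead_sub_U by simp_all
  define z where "z = minv (lead_sub Ut k) *\<^sub>v alpha_vec k"
  have z: "z \<in> carrier_vec k"
    unfolding z_def using minv_carrier[OF U] by (simp add: alpha_vec_def)
  have "x k = (Qmat q N k * Umat u k * minv (lead_sub Ut k)) *\<^sub>v alpha_vec k"
    using x_eq_Wmat[of k] Wmat_eq[of k] by simp
  also have "\<dots> = (Qmat q N k * Umat u k) *\<^sub>v z"
    unfolding z_def
    by (rule assoc_mult_mat_vec[OF mult_carrier_mat[OF Qmat_carrier Umat_carrier] minv_carrier[OF U]])
      (simp add: alpha_vec_def)
  finally show ?thesis
    using that z Tmat_mult_coeffs[of k] unfolding z_def by simp
qed

lemma x_k_in_krylov: "x k \<in> krylov D b k"
proof -
  obtain z where z: "z \<in> carrier_vec k"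
    "Tmat c1 c2 u l k *\<^sub>v z = complex_of_real (vnorm b) \<cdot>\<^sub>v unit_vec k 0"
    "x k = (Qmat q N k * Umat u k) *\<^sub>v z"
    by (rule x_k_QU_solution)
  then show ?thesis
    using galerkin_solution_in_krylov[OF k_pos z(1,2)] by simp
qed

lemma x_k_residual_orth: "y \<in> krylov D b k \<Longrightarrow> (b - D *\<^sub>v x k) \<bullet>c y = 0"
proof -
  assume y: "y \<in> krylov D b k"
  obtain z where z: "z \<in> carrier_vec k"
    "Tmat c1 c2 u l k *\<^sub>v z = complex_of_real (vnorm b) \<cdot>\<^sub>v unit_vec k 0"
    "x k = (Qmat q N k * Umat u k) *\<^sub>v z"
    by (rule x_k_QU_solution)
  then show ?thesis
    using galerkin_residual_orth[OF z(1,2) y] by simp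
qed

lemma x_k_unique:
  assumes "x' \<in> krylov D b k" "\<forall>y\<in>krylov D b k. (b - D *\<^sub>v x') \<bullet>c y = 0"
  shows "x' = x k"
  using galerkin_unique[OF k_pos det_Tmat[OF order_refl] assms x_k_in_krylov] x_k_residual_orth by blast

lemma x_k_eq_QU:
  assumes "z \<in> carrier_vec k" "Tmat c1 c2 u l k *\<^sub>v z = complex_of_real (vnorm b) \<cdot>\<^sub>v unit_vec k 0"
  shows "x k = (Qmat q N k * Umat u k) *\<^sub>v z"
  using x_k_unique[OF galerkin_solution_in_krylov[OF k_pos assms]] galerkin_residual_orth[OF assms] by simp

lemma residual_update: "b - D *\<^sub>v x k = (b - D *\<^sub>v x (k - 1)) - alpha k \<cdot>\<^sub>v (D *\<^sub>v w k)"
proof -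
  have x: "x (k - 1) \<in> carrier_vec N" "w k \<in> carrier_vec N"
    using x_eq_Wmat[of "k - 1"] w_carrier[of k] k_pos by auto
  then have "D *\<^sub>v x k = D *\<^sub>v x (k - 1) + alpha k \<cdot>\<^sub>v (D *\<^sub>v w k)"
    using x_rec k_pos by (simp add: mult_add_distrib_mat_vec[OF D_carrier] mult_mat_vec[OF D_carrier])
  then show ?thesis
    using x b_carrier by (auto intro!: eq_vecI)
qed

end

theorem mainTheorem5:
  fixes V D Lt Ut :: "complex mat" and N k :: nat and c1 c2 :: real and b :: "complex vec"
    and q v w x :: "nat \<Rightarrow> complex vec" and u l :: "nat \<Rightarrow> nat \<Rightarrow> complex"
    and alpha beta gamma :: "nat \<Rightarrow> complex"
  assumes V: "V \<in> carrier_mat N N" "V * mat_adjoint V = 1\<^sub>m N" "mat_adjoint V * V = 1\<^sub>m N"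
    and D: "D = complex_of_real c1 \<cdot>\<^sub>m 1\<^sub>m N + complex_of_real c2 \<cdot>\<^sub>m V"
    and b: "b \<in> carrier_vec N" "b \<noteq> 0\<^sub>v N"
    and k: "1 \<le> k"
    and arnoldi: "unitary_arnoldi V b k q v u l"
    and beta: "\<And>j. beta j = - complex_of_real c2 * l (j+1) j"
    and gamma: "\<And>j. gamma j = - complex_of_real c1 * u j (j+1)"
    and LU: "Lt \<in> carrier_mat k k" "Ut \<in> carrier_mat k k"
      "\<forall>i<k. \<forall>j<k. i < j \<longrightarrow> Lt $$ (i,j) = 0" "\<forall>i<k. Lt $$ (i,i) \<noteq> 0"
      "\<forall>i<k. \<forall>j<i. Ut $$ (i,j) = 0" "\<forall>i<k. Ut $$ (i,i) = 1"
      "Tmat c1 c2 u l k = Lt * Ut"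
    and alpha: "alpha 1 = complex_of_real (vnorm b) / Lt $$ (0,0)"
      "\<forall>j\<in>{2..k}. alpha j = beta (j-1) * alpha (j-1) / Lt $$ (j-1,j-1)"
    and w: "w 1 = q 1"
      "\<forall>j\<in>{2..k}. w j = q j + u (j-1) j \<cdot>\<^sub>v q (j-1)
                          + (gamma (j-1) / Lt $$ (j-2,j-2)) \<cdot>\<^sub>v w (j-1)"
    and x: "x 0 = 0\<^sub>v N" "\<forall>j\<in>{1..k}. x j = x (j-1) + alpha j \<cdot>\<^sub>v w j"
  shows "Lt $$ (0,0) = complex_of_real c1 + complex_of_real c2 * l 1 1
    \<and> (\<forall>j\<in>{2..k}. Lt $$ (j-1,j-1) = complex_of_real c1 + complex_of_real c2 * l j j
                                    - beta (j-1) * gamma (j-1) / Lt $$ (j-2,j-2))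
    \<and> (\<forall>j\<in>{1..k}. w j = (Qmat q N j * Umat u j * minv (lead_sub Ut j)) *\<^sub>v unit_vec j (j-1))
    \<and> (\<forall>j\<in>{1..k}. alpha j = complex_of_real (vnorm b) * minv (Tmat c1 c2 u l j) $$ (j-1, 0))
    \<and> x k \<in> krylov D b k
    \<and> (\<forall>y\<in>krylov D b k. (b - D *\<^sub>v x k) \<bullet>c y = 0)
    \<and> (\<forall>x'\<in>krylov D b k. (\<forall>y\<in>krylov D b k. (b - D *\<^sub>v x') \<bullet>c y = 0) \<longrightarrow> x' = x k)
    \<and> (\<exists>z\<in>carrier_vec k. Tmat c1 c2 u l k *\<^sub>v z = complex_of_real (vnorm b) \<cdot>\<^sub>v unit_vec k 0)
    \<and> (\<forall>z\<in>carrier_vec k. Tmat c1 c2 u l k *\<^sub>v z = complex_of_real (vnorm b) \<cdot>\<^sub>v unit_vec k 0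
         \<longrightarrow> x k = (Qmat q N k * Umat u k) *\<^sub>v z)
    \<and> b - D *\<^sub>v x k = (b - D *\<^sub>v x (k-1)) - alpha k \<cdot>\<^sub>v (D *\<^sub>v w k)"
proof -
  interpret unitary_arnoldi_LU_solver V N k b q v u l D c1 c2 Lt Ut w x alpha beta gamma
    by unfold_locales
      (fact V(1,3) b arnoldi D LU(1,2,7) LU(3-6)[rule_format] Tmat_tridiagonal k beta gamma alpha w x)+
  obtain z where z: "z \<in> carrier_vec k"
    "Tmat c1 c2 u l k *\<^sub>v z = complex_of_real (vnorm b) \<cdot>\<^sub>v unit_vec k 0"
    by (rule x_k_QU_solution)
  show ?thesis
    apply (intro conjI)
    subgoal by (rule pivot_first)
    subgoal using pivot_recurrence by blast
    subgoal using w_eq by blast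
    subgoal using alpha_eq by blast
    subgoal by (rule x_k_in_krylov)
    subgoal using x_k_residual_orth by blast
    subgoal using x_k_unique by blast
    subgoal using z by blast
    subgoal using x_k_eq_QU by blast
    subgoal by (rule residual_update)
    done
qed

end
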